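(* Let $\Gamma$ be isoradially embedded in a flat surface $\Sigma$ with critical weights, and let $(C_\Gamma,y)$, $\psi_B,\psi_W$, $\theta_B,\theta_W,\mu_W$ and the operators $\bar\partial^{\varphi}_C$ be as in the context. Given any Kasteleyn orientation $\omega$ on $C_\Gamma\subset\Sigma$, there exists a unique discrete spin structure $\varphi_\omega$ on $C_\Gamma$ such that \[ K^\omega(C_\Gamma,y)\circ\exp\left(-\tfrac i2\theta_B\right)=\exp\left(-\tfrac i2\theta_W\right)\circ\mu_W\circ\bar\partial_C^{\varphi_\omega} \] as maps $\mathbb C^B\to\mathbb C^W$. Furthermore, $\omega\mapsto\varphi_\omega$ induces a bijection between equivalence classes of Kasteleyn orientations on $C_\Gamma\subset\Sigma$ and cohomology classes in $H^1(\Sigma;S^1)$ of discrete spin structures (inverse square roots of the holonomy of $\Sigma$).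
   Context: Isoradial setting: $\Sigma$ is a closed connected oriented flat surface with conical singularities obtained by gluing planar rhombi of common side length $\delta$ along their sides, each rhombus having a distinguished diagonal, such that endpoints of diagonals are glued to endpoints of diagonals; the diagonals form the edges of a graph $\Gamma\subset\Sigma$ whose faces are discs, and all cone angles (at vertices of $\Gamma$ and in faces) are odd multiples of $2\pi$. For an edge $e$, $\theta_e\in[0,\pi/2]$ is the half-rhombus angle (angle at an endpoint of $e$ between $e$ and a side of its rhombus); the critical weights are $x_e=\tan(\theta_e/2)$. Since cone angles are multiples of $2\pi$, parallel transport along closed curves avoiding the singularities defines the holonomy $\mathit{Hol}\in H^1(\Sigma;S^1)$. Notation: $\mathbb E$ oriented edges of $\Gamma$, $\bar e$ reversal, $\theta_{\bar e}=\theta_e$; for $e$ with origin $v$, $R(e)$ is the next oriented edge with origin $v$ counterclockwise. The bipartite graph $(C_\Gamma,y)$: each edge $e$ is replaced by a rectangle; for each orientation $e$, the rectangle vertex near $o(e)$ on the right of $e$ is black, $\psi_B(e)$, and the one near $o(e)$ on the left is white, $\psi_W(e)$; edges $\{\psi_W(e),\psi_B(e)\}$ of weight $\cos\theta_e$, $\{\psi_W(e),\psi_B(\bar e)\}$ of weight $\sin\theta_e$, and corner edges $\{\psi_W(e),\psi_B(R(e))\}$ of weight $1$. $B,W$ are the black/white vertex sets; $\psi_B,\psi_W$ are bijections from $\mathbb E$. A Kasteleyn orientation is $\omega\colon E(C_\Gamma)\to\{\pm1\}$ with product over the boundary of each face $f$ of $C_\Gamma\subset\Sigma$ equal to $(-1)^{|\partial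 f|/2+1}$; two are equivalent if related by flipping the signs of all edges at some set of vertices. $K^\omega(C_\Gamma,y)\colon\mathbb C^B\to\mathbb C^W$, $(K^\omega g)(w)=\sum_{b\sim w}\omega(w,b)y_{wb}g(b)$. Diagonal operators: $(\theta_Bg)(b)=\theta_eg(b)$ for $b=\psi_B(e)$; $(\theta_Wh)(w)=\theta_eh(w)$ and $(\mu_Wh)(w)=\mu_wh(w)$ for $w=\psi_W(e)$, with $\mu_w=\sin(2\theta_e)$ (half the sum of $\sin 2\vartheta$ over the half-rhombus angles $\theta_e,\pi/2-\theta_e,\pi/2$ of the three edges at $w$ in the natural $\delta/2$-isoradial embedding of $C_\Gamma$). Discrete $\bar\partial$-operator for a cochain $\varphi\colon$ (oriented edges of $C_\Gamma$)$\to\mathbb C^*$, $\varphi(b,w)=\varphi(w,b)^{-1}$ (computed in this isoradial embedding with the vector field at $w=\psi_W(e)$ pointing towards $\psi_B(e)$): for $w=\psi_W(e)$, $b_1=\psi_B(e)$, $b_2=\psi_B(\bar e)$, $b_3=\psi_B(R(e))$, \[ (\bar\partial^\varphi_Cg)(w)=\mu_w^{-1}\big(\varphi(w,b_1)\cos\theta_e\,g(b_1)+i\varphi(w,b_2)\sin\theta_e\,g(b_2)-e^{i\theta_e}\varphi(w,b_3)g(b_3)\big). \] A discrete spin structure is an $S^1$-valued 1-cocycle $\varphi$ on $C_\Gamma$ (product $1$ around each face of $C_\Gamma\subset\Sigma$) such that $\varphi(\gamma)^{-2}=\mathit{Hol}(\gamma)$ for every closed path $\gamma$ in $C_\Gamma$.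 *)

theory Defs
  imports Complex_Main "HOL-Library.FuncSet"
begin

(* Combinatorial model of an isoradial graph Gamma on a flat surface.  *)
(*   E    : the oriented edges (darts) of Gamma                        *)
(*   rv   : reversal e |-> bar e                                      *)
(*   R    : R(e) = next dart with the same origin, counterclockwise    *)
(*   th   : half-rhombus angles theta_e                                *)
(* The vertices of Gamma are the R-orbits; the faces are the orbits of *)
(* e |-> R^{-1}(bar e).  The flat surface Sigma is the one obtained by *)
(* gluing, for every edge e, a rhombus with angle 2 theta_e at the     *)
(* endpoints of its diagonal e, following the rotation system.         *)

definition orbit :: "('a \<Rightarrow> 'a) \<Rightarrow> 'a \<Rightarrow> 'a set" where
  "orbit f x = {(f ^^ n) x | n. True}"

definition isoradial :: "'d set \<Rightarrow> ('d \<Rightarrow> 'd) \<Rightarrow> ('d \<Rightarrow> 'd) \<Rightarrow> ('d \<Rightarrow> real) \<Rightarrow> bool" where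
  "isoradial E rv R th \<longleftrightarrow>
     finite E \<and> E \<noteq> {} \<and>
     (\<forall>e\<in>E. rv e \<in> E \<and> rv e \<noteq> e \<and> rv (rv e) = e) \<and>
     bij_betw R E E \<and>
     (\<forall>e\<in>E. th (rv e) = th e \<and> 0 \<le> th e \<and> th e \<le> pi / 2) \<and>
     \<comment> \<open>connectedness of Sigma\<close>
     (\<forall>e\<in>E. \<forall>e'\<in>E. (e, e') \<in> ({(x, R x) | x. x \<in> E} \<union> {(x, rv x) | x. x \<in> E})\<^sup>*) \<and>
     \<comment> \<open>cone angle at each vertex of Gamma is an odd multiple of 2 pi\<close>
     (\<forall>e\<in>E. \<exists>k::int. (\<Sum>x\<in>orbit R e. 2 * th x) = (2 * of_int k + 1) * (2 * pi)) \<and>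
     \<comment> \<open>cone angle in each face of Gamma is an odd multiple of 2 pi\<close>
     (\<forall>e\<in>E. \<exists>k::int. (\<Sum>x\<in>orbit (\<lambda>x. inv_into E R (rv x)) e. pi - 2 * th x)
                        = (2 * of_int k + 1) * (2 * pi))"

(* The bipartite graph C_Gamma.  Black vertex psi_B(e) = Bl e, white   *)
(* vertex psi_W(e) = Wh e.  The white vertex Wh e has exactly three    *)
(* edges, indexed by (e,k):                                           *)
(*   (e,Cos): Wh e -- Bl e        weight cos theta_e                  *)
(*   (e,Sin): Wh e -- Bl (bar e)  weight sin theta_e                  *)
(*   (e,Cor): Wh e -- Bl (R e)    weight 1                            *)
(* So functions on B (resp. W, resp. edges) are functions on darts     *)
(* (resp. darts, resp. dart x kind) via psi_B, psi_W.                  *)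

datatype ckind = Cos | Sin | Cor
datatype 'd cvert = Bl 'd | Wh 'd

fun ctgt :: "('d \<Rightarrow> 'd) \<Rightarrow> ('d \<Rightarrow> 'd) \<Rightarrow> ckind \<Rightarrow> 'd \<Rightarrow> 'd" where
  "ctgt rv R Cos e = e"
| "ctgt rv R Sin e = rv e"
| "ctgt rv R Cor e = R e"

fun cweight :: "('d \<Rightarrow> real) \<Rightarrow> ckind \<Rightarrow> 'd \<Rightarrow> real" where
  "cweight th Cos e = cos (th e)"
| "cweight th Sin e = sin (th e)"
| "cweight th Cor e = 1"

(* oriented edges of C_Gamma: (e,k,True) goes Wh e -> Bl (ctgt k e), (e,k,False) is its reversal *)
type_synonym 'd cdart = "'d \<times> ckind \<times> bool"

definition cdarts :: "'d set \<Rightarrow> 'd cdart set" where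
  "cdarts E = E \<times> UNIV \<times> UNIV"

fun corigin :: "('d \<Rightarrow> 'd) \<Rightarrow> ('d \<Rightarrow> 'd) \<Rightarrow> 'd cdart \<Rightarrow> 'd cvert" where
  "corigin rv R (e, k, True) = Wh e"
| "corigin rv R (e, k, False) = Bl (ctgt rv R k e)"

fun ctarget :: "('d \<Rightarrow> 'd) \<Rightarrow> ('d \<Rightarrow> 'd) \<Rightarrow> 'd cdart \<Rightarrow> 'd cvert" where
  "ctarget rv R (e, k, True) = Bl (ctgt rv R k e)"
| "ctarget rv R (e, k, False) = Wh e"

fun crev :: "'d cdart \<Rightarrow> 'd cdart" where
  "crev (e, k, b) = (e, k, \<not> b)"

(* Inverse of the counterclockwise rotation at the origin of a dart of C_Gamma \<subset> Sigma.
   Counterclockwise order at Wh e:  (e,Sin), (e,Cor), (e,Cos).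
   Counterclockwise order at Bl x:  (bar x,Sin), (x,Cos), (R^{-1} x,Cor). *)
fun crot_inv :: "'d set \<Rightarrow> ('d \<Rightarrow> 'd) \<Rightarrow> ('d \<Rightarrow> 'd) \<Rightarrow> 'd cdart \<Rightarrow> 'd cdart" where
  "crot_inv E rv R (e, Sin, True) = (e, Cos, True)"
| "crot_inv E rv R (e, Cor, True) = (e, Sin, True)"
| "crot_inv E rv R (e, Cos, True) = (e, Cor, True)"
| "crot_inv E rv R (e, Cos, False) = (rv e, Sin, False)"
| "crot_inv E rv R (e, Cor, False) = (R e, Cos, False)"
| "crot_inv E rv R (e, Sin, False) = (inv_into E R (rv e), Cor, False)"

(* face permutation of C_Gamma \<subset> Sigma; faces = orbits, boundary walk = orbit *)
definition cface :: "'d set \<Rightarrow> ('d \<Rightarrow> 'd) \<Rightarrow> ('d \<Rightarrow> 'd) \<Rightarrow> 'd cdart \<Rightarrow> 'd cdart" where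
  "cface E rv R d = crot_inv E rv R (crev d)"

fun cedge :: "'d cdart \<Rightarrow> 'd \<times> ckind" where
  "cedge (e, k, b) = (e, k)"

definition kasteleyn :: "'d set \<Rightarrow> ('d \<Rightarrow> 'd) \<Rightarrow> ('d \<Rightarrow> 'd) \<Rightarrow> ('d \<times> ckind \<Rightarrow> real) \<Rightarrow> bool" where
  "kasteleyn E rv R \<omega> \<longleftrightarrow>
     \<omega> \<in> extensional (E \<times> UNIV) \<and>
     (\<forall>e\<in>E. \<forall>k. \<omega> (e, k) = 1 \<or> \<omega> (e, k) = -1) \<and>
     (\<forall>d\<in>cdarts E. (\<Prod>d'\<in>orbit (cface E rv R) d. \<omega> (cedge d'))
                     = (-1) ^ (card (orbit (cface E rv R) d) div 2 + 1))"

definition kast_equiv :: "'d set \<Rightarrow> ('d \<Rightarrow> 'd) \<Rightarrow> ('d \<Rightarrow> 'd) \<Rightarrow> ('d \<times> ckind \<Rightarrow> real) \<Rightarrow> ('d \<times> ckind \<Rightarrow> real) \<Rightarrow> bool" where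
  "kast_equiv E rv R \<omega>1 \<omega>2 \<longleftrightarrow>
     (\<exists>s :: 'd cvert \<Rightarrow> real. (\<forall>v. s v = 1 \<or> s v = -1) \<and>
        (\<forall>e\<in>E. \<forall>k. \<omega>2 (e, k) = s (Wh e) * \<omega>1 (e, k) * s (Bl (ctgt rv R k e))))"

(* Kasteleyn operator K^omega(C_Gamma,y) : C^B -> C^W  (g indexed by psi_B, result by psi_W) *)
definition kast_op :: "('d \<Rightarrow> 'd) \<Rightarrow> ('d \<Rightarrow> 'd) \<Rightarrow> ('d \<Rightarrow> real) \<Rightarrow> ('d \<times> ckind \<Rightarrow> real)
                        \<Rightarrow> ('d \<Rightarrow> complex) \<Rightarrow> 'd \<Rightarrow> complex" where
  "kast_op rv R th \<omega> g e =
     (\<Sum>k\<in>{Cos, Sin, Cor}. complex_of_real (\<omega> (e, k) * cweight th k e) * g (ctgt rv R k e))"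

definition mu :: "('d \<Rightarrow> real) \<Rightarrow> 'd \<Rightarrow> real" where
  "mu th e = sin (2 * th e)"

(* phi (e,k) is the value phi(w,b) on the edge (e,k) oriented from white to black *)
definition dbar :: "('d \<Rightarrow> 'd) \<Rightarrow> ('d \<Rightarrow> 'd) \<Rightarrow> ('d \<Rightarrow> real) \<Rightarrow> ('d \<times> ckind \<Rightarrow> complex)
                     \<Rightarrow> ('d \<Rightarrow> complex) \<Rightarrow> 'd \<Rightarrow> complex" where
  "dbar rv R th \<phi> g e =
     inverse (complex_of_real (mu th e)) *
       (\<phi> (e, Cos) * complex_of_real (cos (th e)) * g e
        + \<i> * \<phi> (e, Sin) * complex_of_real (sin (th e)) * g (rv e)
        - exp (\<i> * complex_of_real (th e)) * \<phi> (e, Cor) * g (R e))"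

definition dirac_identity :: "'d set \<Rightarrow> ('d \<Rightarrow> 'd) \<Rightarrow> ('d \<Rightarrow> 'd) \<Rightarrow> ('d \<Rightarrow> real)
                               \<Rightarrow> ('d \<times> ckind \<Rightarrow> real) \<Rightarrow> ('d \<times> ckind \<Rightarrow> complex) \<Rightarrow> bool" where
  "dirac_identity E rv R th \<omega> \<phi> \<longleftrightarrow>
     (\<forall>g. \<forall>e\<in>E.
        kast_op rv R th \<omega> (\<lambda>x. exp (- \<i> * complex_of_real (th x) / 2) * g x) e
        = exp (- \<i> * complex_of_real (th e) / 2) * complex_of_real (mu th e) * dbar rv R th \<phi> g e)"

(* Angles of the edges of C_Gamma at their endpoints in the natural delta/2-isoradial embedding,
   measured counterclockwise from the reference vector field (at Wh e pointing to Bl e,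
   at Bl x pointing to Wh x). *)
fun angW :: "('d \<Rightarrow> 'd) \<Rightarrow> ('d \<Rightarrow> real) \<Rightarrow> ckind \<Rightarrow> 'd \<Rightarrow> real" where
  "angW R th Cos e = 0"
| "angW R th Sin e = pi / 2"
| "angW R th Cor e = pi + th e"

fun angB :: "('d \<Rightarrow> 'd) \<Rightarrow> ('d \<Rightarrow> real) \<Rightarrow> ckind \<Rightarrow> 'd \<Rightarrow> real" where
  "angB R th Cos e = 0"
| "angB R th Sin e = - pi / 2"
| "angB R th Cor e = pi - th (R e)"

(* Parallel transport along the straight dart x->y rotates the reference vector at x into
   the reference vector at y rotated by c = pi + ang_y(y->x) - ang_x(x->y).
   hol_dart = exp(-i c): holonomy factor (rotation angles counted clockwise, the convention
   under which Hol = phi^{-2}). *)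
fun hol_dart :: "('d \<Rightarrow> 'd) \<Rightarrow> ('d \<Rightarrow> real) \<Rightarrow> 'd cdart \<Rightarrow> complex" where
  "hol_dart R th (e, k, True) =
     exp (- \<i> * complex_of_real (pi + angB R th k e - angW R th k e))"
| "hol_dart R th (e, k, False) =
     exp (- \<i> * complex_of_real (pi + angW R th k e - angB R th k e))"

definition closed_path :: "'d set \<Rightarrow> ('d \<Rightarrow> 'd) \<Rightarrow> ('d \<Rightarrow> 'd) \<Rightarrow> 'd cdart list \<Rightarrow> bool" where
  "closed_path E rv R \<gamma> \<longleftrightarrow>
     \<gamma> \<noteq> [] \<and> set \<gamma> \<subseteq> cdarts E \<and>
     (\<forall>i. Suc i < length \<gamma> \<longrightarrow> ctarget rv R (\<gamma> ! i) = corigin rv R (\<gamma> ! Suc i)) \<and>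
     ctarget rv R (last \<gamma>) = corigin rv R (hd \<gamma>)"

definition path_hol :: "('d \<Rightarrow> 'd) \<Rightarrow> ('d \<Rightarrow> real) \<Rightarrow> 'd cdart list \<Rightarrow> complex" where
  "path_hol R th \<gamma> = prod_list (map (hol_dart R th) \<gamma>)"

fun dphi :: "('d \<times> ckind \<Rightarrow> complex) \<Rightarrow> 'd cdart \<Rightarrow> complex" where
  "dphi \<phi> (e, k, True) = \<phi> (e, k)"
| "dphi \<phi> (e, k, False) = inverse (\<phi> (e, k))"

definition path_phi :: "('d \<times> ckind \<Rightarrow> complex) \<Rightarrow> 'd cdart list \<Rightarrow> complex" where
  "path_phi \<phi> \<gamma> = prod_list (map (dphi \<phi>) \<gamma>)"

definition spin_structure :: "'d set \<Rightarrow> ('d \<Rightarrow> 'd) \<Rightarrow> ('d \<Rightarrow> 'd) \<Rightarrow> ('d \<Rightarrow> real)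
                               \<Rightarrow> ('d \<times> ckind \<Rightarrow> complex) \<Rightarrow> bool" where
  "spin_structure E rv R th \<phi> \<longleftrightarrow>
     \<phi> \<in> extensional (E \<times> UNIV) \<and>
     (\<forall>e\<in>E. \<forall>k. norm (\<phi> (e, k)) = 1) \<and>
     (\<forall>d\<in>cdarts E. (\<Prod>d'\<in>orbit (cface E rv R) d. dphi \<phi> d') = 1) \<and>
     (\<forall>\<gamma>. closed_path E rv R \<gamma> \<longrightarrow> inverse (path_phi \<phi> \<gamma> ^ 2) = path_hol R th \<gamma>)"

definition cohomologous :: "'d set \<Rightarrow> ('d \<Rightarrow> 'd) \<Rightarrow> ('d \<Rightarrow> 'd)
                             \<Rightarrow> ('d \<times> ckind \<Rightarrow> complex) \<Rightarrow> ('d \<times> ckind \<Rightarrow> complex) \<Rightarrow> bool" where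
  "cohomologous E rv R \<phi>1 \<phi>2 \<longleftrightarrow>
     (\<exists>f :: 'd cvert \<Rightarrow> complex. (\<forall>v. norm (f v) = 1) \<and>
        (\<forall>e\<in>E. \<forall>k. \<phi>2 (e, k) = \<phi>1 (e, k) * f (Bl (ctgt rv R k e)) / f (Wh e)))"

end

theory Submission
  imports Defs
begin

text \<open>Comparing the coefficients of the Dirac identity at each white vertex forces
  \<open>\<phi>\<^sub>\<omega> = phase \<cdot> \<omega>\<close>, where \<open>phase\<close> is \<open>1\<close> on cosine edges, \<open>-\<i>\<close> on sine edges and
  \<open>-exp (-\<i> (\<theta> e + \<theta> (R e)) / 2)\<close> on corner edges; when \<open>R e = rv e\<close> the comparison yields only
  one linear relation and the holonomy around a 2-cycle supplies the missing one.
  Because the cone angles at the vertices and in the faces of \<open>\<Gamma>\<close> are odd multiples of \<open>2\<pi>\<close>,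
  the phases multiply to \<open>(-1)^(|\<partial>f|/2+1)\<close> around every face \<open>f\<close> of \<open>C_\<Gamma>\<close>, and the inverse square
  of the phase of each dart is minus its holonomy; closed paths in the bipartite graph \<open>C_\<Gamma>\<close>
  have even length, so \<open>phase \<cdot> \<omega>\<close> is a spin structure exactly when \<open>\<omega>\<close> is Kasteleyn.
  A sign gauge of \<open>\<omega>\<close> is a gauge of \<open>\<phi>\<^sub>\<omega>\<close>, and conversely an odd sign function on the circle
  turns a unimodular gauge between two such cocycles into a sign gauge. Finally, for any spin
  structure \<open>\<phi>\<close> the cochain \<open>(\<phi> / phase)\<^sup>2\<close> is closed, hence \<open>h(target)/h(origin)\<close> on the
  connected graph; a square root of \<open>h\<close> gauges \<open>\<phi> / phase\<close> into a \<open>\<plusminus>1\<close>-valued \<open>\<omega>\<close>.\<close>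

lemma UNIV_ckind: "(UNIV :: ckind set) = {Cos, Sin, Cor}"
  by (auto intro: ckind.exhaust)

lemma finite_cdarts: "finite E \<Longrightarrow> finite (cdarts E)"
  by (simp add: cdarts_def UNIV_ckind)

lemma cis_sum: "finite A \<Longrightarrow> (\<Prod>x\<in>A. cis (f x)) = cis (\<Sum>x\<in>A. f x)"
  by (induction A rule: finite_induct) (auto simp: cis_mult)

lemma cis_minus_odd_pi: "cis (- ((2 * of_int k + 1) * pi)) = -1"
proof -
  have "cis ((2 * of_int k + 1) * pi) = cis (2 * pi * of_int k) * cis pi"
    unfolding cis_mult by (simp add: algebra_simps)
  then have "cis ((2 * of_int k + 1) * pi) = -1" by simp
  moreover have "cis (- ((2 * of_int k + 1) * pi)) = inverse (cis ((2 * of_int k + 1) * pi))" by simp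
  ultimately show ?thesis by simp
qed

lemma cis_diff_pi: "cis (x - pi) = - cis x"
  by (simp add: cis_divide[symmetric])

lemma cis_half_square: "cis (x / 2) ^ 2 = cis x"
  by (simp add: DeMoivre)

lemma cis_minus_pi: "cis (- pi) = -1"
  by (simp add: complex_eq_iff)

lemma exp_imaginary: "exp (\<i> * complex_of_real t) = cis t"
  and exp_minus_imaginary: "exp (- \<i> * complex_of_real t) = cis (- t)"
  and exp_minus_imaginary_half: "exp (- \<i> * complex_of_real t / 2) = cis (- t / 2)"
  by (simp_all add: cis_conv_exp)

lemma funpow_closed: "f ` A \<subseteq> A \<Longrightarrow> x \<in> A \<Longrightarrow> (f ^^ n) x \<in> A"
  by (induction n) auto

lemma orbit_subset: "f ` A \<subseteq> A \<Longrightarrow> x \<in> A \<Longrightarrow> orbit f x \<subseteq> A"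
  unfolding orbit_def using funpow_closed[of f A x] by auto

lemma funpow_mem_orbit: "(f ^^ n) x \<in> orbit f x"
  unfolding orbit_def by blast

lemma funpow_return:
  assumes "finite A" "inj_on f A" "f ` A \<subseteq> A" "x \<in> A"
  obtains p where "p > 0" "(f ^^ p) x = x"
proof -
  have "\<not> inj_on (\<lambda>n. (f ^^ n) x) {..card A}"
  proof
    assume "inj_on (\<lambda>n. (f ^^ n) x) {..card A}"
    moreover have "(\<lambda>n. (f ^^ n) x) ` {..card A} \<subseteq> A"
      using funpow_closed[OF assms(3,4)] by auto
    ultimately show False
      using card_inj_on_le[OF _ _ assms(1)] by fastforce
  qed
  then obtain i j where "i < j" and ij: "(f ^^ i) x = (f ^^ j) x"
    unfolding inj_on_def by (metis linorder_neqE_nat)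
  then obtain m where "m > 0" "j = i + m" using less_imp_add_positive by blast
  with ij have im: "(f ^^ (i + m)) x = (f ^^ i) x" by simp
  have "(f ^^ m) x = x"
    using im
  proof (induction i)
    case (Suc i)
    then show ?case
      using inj_onD[OF assms(2)] funpow_closed[OF assms(3,4)] by simp
  qed simp
  with \<open>m > 0\<close> show thesis by (rule that)
qed

lemma image_orbit:
  assumes "p > 0" "(f ^^ p) x = x"
  shows "f ` orbit f x = orbit f x"
proof
  show "f ` orbit f x \<subseteq> orbit f x"
  proof
    fix y assume "y \<in> f ` orbit f x"
    then obtain n where "y = (f ^^ Suc n) x" unfolding orbit_def by auto
    then show "y \<in> orbit f x" using funpow_mem_orbit by metis
  qed
  show "orbit f x \<subseteq> f ` orbit f x"
  proof
    fix y assume "y \<in> orbit f x"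
    then obtain n where "y = (f ^^ n) x" unfolding orbit_def by auto
    also have "\<dots> = (f ^^ (n + p)) x" using assms(2) by (simp add: funpow_add)
    also have "\<dots> = (f ^^ Suc (n + p - 1)) x" using assms(1) by simp
    also have "\<dots> = f ((f ^^ (n + p - 1)) x)" by simp
    finally show "y \<in> f ` orbit f x" using funpow_mem_orbit by (rule image_eqI)
  qed
qed

lemma orbit_of_inj_on:
  assumes "finite A" "inj_on f A" "f ` A \<subseteq> A" "x \<in> A"
  shows "f ` orbit f x = orbit f x" and "orbit f x \<subseteq> A" and "finite (orbit f x)"
proof -
  obtain p where "p > 0" "(f ^^ p) x = x" using funpow_return[OF assms] .
  then show "f ` orbit f x = orbit f x" by (rule image_orbit)
  show sub: "orbit f x \<subseteq> A" using orbit_subset[OF assms(3,4)] .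
  show "finite (orbit f x)" using finite_subset[OF sub assms(1)] .
qed

text \<open>The face permutation of \<open>C_\<Gamma>\<close> alternates between two kinds of darts, say \<open>a\<close> and \<open>b\<close>,
  and every second step it advances one step along a permutation \<open>g\<close> of \<open>\<Gamma>\<close>.\<close>

lemma funpow_alternating:
  assumes fa: "\<And>y. f (a y) = b (g y)" and fb: "\<And>y. f (b y) = a y"
  shows "(f ^^ (2 * n)) (a x) = a ((g ^^ n) x)" "(f ^^ Suc (2 * n)) (a x) = b ((g ^^ Suc n) x)"
    "(f ^^ (2 * n)) (b x) = b ((g ^^ n) x)" "(f ^^ Suc (2 * n)) (b x) = a ((g ^^ n) x)"
  by (induction n) (simp_all add: fa fb)

lemma orbit_even_odd: "orbit f x = range (\<lambda>n. (f ^^ (2 * n)) x) \<union> range (\<lambda>n. (f ^^ Suc (2 * n)) x)"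
proof (intro equalityI subsetI)
  fix y assume "y \<in> orbit f x"
  then obtain m where y: "y = (f ^^ m) x" unfolding orbit_def by auto
  consider n where "m = 2 * n" | n where "m = Suc (2 * n)"
    by (metis evenE oddE Suc_eq_plus1)
  then show "y \<in> range (\<lambda>n. (f ^^ (2 * n)) x) \<union> range (\<lambda>n. (f ^^ Suc (2 * n)) x)"
    by cases (auto simp: y)
qed (auto simp del: funpow.simps intro: funpow_mem_orbit)

lemma orbit_alternating:
  assumes fa: "\<And>y. f (a y) = b (g y)" and fb: "\<And>y. f (b y) = a y"
    and g: "g ` orbit g x = orbit g x"
  shows "orbit f (a x) = a ` orbit g x \<union> b ` orbit g x"
    and "orbit f (b x) = a ` orbit g x \<union> b ` orbit g x"
proof -
  have "range (\<lambda>n. b ((g ^^ Suc n) x)) = b ` g ` orbit g x"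
    unfolding orbit_def by auto
  then show "orbit f (a x) = a ` orbit g x \<union> b ` orbit g x"
    unfolding orbit_even_odd[of f] funpow_alternating[where f=f and a=a and b=b and g=g, OF fa fb] g
    by (simp add: orbit_def image_image full_SetCompr_eq)
  show "orbit f (b x) = a ` orbit g x \<union> b ` orbit g x"
    unfolding orbit_even_odd[of f] funpow_alternating[where f=f and a=a and b=b and g=g, OF fa fb]
    by (auto simp: orbit_def)
qed

lemma alternating_return:
  assumes fa: "\<And>y. f (a y) = b (g y)" and fb: "\<And>y. f (b y) = a y"
    and "p > 0" "(g ^^ p) x = x"
  shows "\<exists>q>0. (f ^^ q) (a x) = a x" "\<exists>q>0. (f ^^ q) (b x) = b x"
  using funpow_alternating(1,3)[where f=f and a=a and b=b and g=g, OF fa fb, of p x] assms(3,4)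
  by (auto intro!: exI[of _ "2 * p"])

lemma prod_union_two_copies:
  assumes "finite A" "inj a" "inj b" "\<And>x y. a x \<noteq> b y"
  shows "prod h (a ` A \<union> b ` A) = (\<Prod>x\<in>A. h (a x)) * (\<Prod>x\<in>A. h (b x))"
    and "card (a ` A \<union> b ` A) = 2 * card A"
proof -
  have disj: "a ` A \<inter> b ` A = {}" and inj: "inj_on a A" "inj_on b A"
    using assms(2-4) by (auto intro: inj_on_subset)
  show "prod h (a ` A \<union> b ` A) = (\<Prod>x\<in>A. h (a x)) * (\<Prod>x\<in>A. h (b x))"
    using prod.union_disjoint[OF _ _ disj] assms(1) by (simp add: prod.reindex[OF inj(1)] prod.reindex[OF inj(2)])
  show "card (a ` A \<union> b ` A) = 2 * card A"
    using card_Un_disjoint[OF _ _ disj] assms(1) by (simp add: card_image[OF inj(1)] card_image[OF inj(2)])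
qed

definition face_next :: "'d set \<Rightarrow> ('d \<Rightarrow> 'd) \<Rightarrow> ('d \<Rightarrow> 'd) \<Rightarrow> 'd \<Rightarrow> 'd" where
  "face_next E rv R x = inv_into E R (rv x)"

context
  fixes E :: "'d set" and rv R :: "'d \<Rightarrow> 'd" and th :: "'d \<Rightarrow> real"
  assumes iso: "isoradial E rv R th"
begin

lemma finite_darts: "finite E"
  and darts_nonempty: "E \<noteq> {}"
  and rv_in: "e \<in> E \<Longrightarrow> rv e \<in> E"
  and rv_neq: "e \<in> E \<Longrightarrow> rv e \<noteq> e"
  and rv_rv: "e \<in> E \<Longrightarrow> rv (rv e) = e"
  and th_rv: "e \<in> E \<Longrightarrow> th (rv e) = th e"
  and bij_R: "bij_betw R E E"
  and darts_connected:
    "e \<in> E \<Longrightarrow> e' \<in> E \<Longrightarrow> (e, e') \<in> ({(x, R x) | x. x \<in> E} \<union> {(x, rv x) | x. x \<in> E})\<^sup>*"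
  and vertex_cone_angle:
    "e \<in> E \<Longrightarrow> \<exists>k::int. (\<Sum>x\<in>orbit R e. 2 * th x) = (2 * of_int k + 1) * (2 * pi)"
  and face_cone_angle:
    "e \<in> E \<Longrightarrow> \<exists>k::int. (\<Sum>x\<in>orbit (face_next E rv R) e. pi - 2 * th x) = (2 * of_int k + 1) * (2 * pi)"
  using iso unfolding isoradial_def face_next_def by auto

lemma R_in: "e \<in> E \<Longrightarrow> R e \<in> E"
  using bij_R by (auto simp: bij_betw_def)

lemma face_next_in: "e \<in> E \<Longrightarrow> face_next E rv R e \<in> E"
  unfolding face_next_def using bij_R rv_in by (metis bij_betw_def inv_into_into)

lemma R_face_next: "e \<in> E \<Longrightarrow> R (face_next E rv R e) = rv e"
  unfolding face_next_def using bij_R rv_in by (metis bij_betw_def f_inv_into_f)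

lemma inj_on_face_next: "inj_on (face_next E rv R) E"
  by (rule inj_onI) (metis R_face_next rv_rv)

lemma R_orbit:
  assumes "e \<in> E"
  shows "R ` orbit R e = orbit R e" and "orbit R e \<subseteq> E" and "finite (orbit R e)"
  using orbit_of_inj_on[OF finite_darts _ _ assms] bij_R by (auto simp: bij_betw_def)

lemma face_next_orbit:
  assumes "e \<in> E"
  shows "face_next E rv R ` orbit (face_next E rv R) e = orbit (face_next E rv R) e"
    and "orbit (face_next E rv R) e \<subseteq> E" and "finite (orbit (face_next E rv R) e)"
  using orbit_of_inj_on[OF finite_darts inj_on_face_next _ assms] face_next_in by auto

lemma orbit_rv: "e \<in> E \<Longrightarrow> orbit rv e = {e, rv e}"
proof -
  assume e: "e \<in> E"
  have "(rv ^^ n) e = (if even n then e else rv e)" for n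
    by (induction n) (auto simp: rv_rv[OF e])
  then show ?thesis
    unfolding orbit_def by (auto intro: exI[of _ 0] exI[of _ 1])
qed

lemma R_no_fixpoint:
  assumes pos: "0 < th e" "th e < pi / 2" and e: "e \<in> E"
  shows "R e \<noteq> e"
proof
  assume "R e = e"
  then have "(R ^^ n) e = e" for n by (induction n) simp_all
  then have "orbit R e = {e}" unfolding orbit_def by auto
  then obtain k :: int where k: "th e = (2 * of_int k + 1) * pi"
    using vertex_cone_angle[OF e] by auto
  show False
  proof (cases "k \<ge> 0")
    case True
    then have "1 * pi \<le> (2 * of_int k + 1) * pi" by (intro mult_right_mono) simp_all
    then show False using k pos by linarith
  next
    case False
    then have "(2 * of_int k + 1) * pi \<le> (-1) * pi" by (intro mult_right_mono) simp_all
    then show False using k pos by linarith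
  qed
qed

end

section \<open>The phase cocycle and the faces of \<open>C_\<Gamma>\<close>\<close>

text \<open>The values that \<open>\<phi>\<^sub>\<omega>\<close> is forced to take when \<open>\<omega> \<equiv> 1\<close>.\<close>

fun phase :: "('d \<Rightarrow> 'd) \<Rightarrow> ('d \<Rightarrow> real) \<Rightarrow> 'd \<times> ckind \<Rightarrow> complex" where
  "phase R th (e, Cos) = 1"
| "phase R th (e, Sin) = - \<i>"
| "phase R th (e, Cor) = - cis (- (th e + th (R e)) / 2)"

lemma norm_phase [simp]: "norm (phase R th (e, k)) = 1"
  by (cases k) auto

lemma phase_nonzero: "phase R th (e, k) \<noteq> 0"
  using norm_phase[of R th e k] by (metis norm_zero zero_neq_one)

lemma norm_dphi: "norm (\<phi> (e, k)) = 1 \<Longrightarrow> norm (dphi \<phi> (e, k, b)) = 1"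
  by (cases b) (simp_all add: norm_inverse)

lemma norm_path_phi: "(\<And>d. d \<in> set \<gamma> \<Longrightarrow> norm (dphi \<phi> d) = 1) \<Longrightarrow> norm (path_phi \<phi> \<gamma>) = 1"
  unfolding path_phi_def by (induction \<gamma>) (auto simp: norm_mult)

lemma prod_alternating_sign:
  fixes k1 k2 :: ckind and b1 b2 :: bool
  assumes "finite A" "(k1, b1) \<noteq> (k2, b2)"
    and "(\<Prod>x\<in>A. h (x, k1, b1)) * (\<Prod>x\<in>A. h (x, k2, b2)) = (-1) ^ (card A + 1)"
  shows "prod h ((\<lambda>x. (x, k1, b1)) ` A \<union> (\<lambda>x. (x, k2, b2)) ` A)
       = (-1) ^ (card ((\<lambda>x. (x, k1, b1)) ` A \<union> (\<lambda>x. (x, k2, b2)) ` A) div 2 + 1)"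
proof -
  have "inj (\<lambda>x. (x, k1, b1))" "inj (\<lambda>x. (x, k2, b2))" "\<And>x y. (x, k1, b1) \<noteq> (y, k2, b2)"
    using assms(2) by (auto intro: injI)
  note two_copies = prod_union_two_copies[OF assms(1) this]
  show ?thesis using assms(3) by (simp add: two_copies)
qed

context
  fixes E :: "'d set" and rv R :: "'d \<Rightarrow> 'd" and th :: "'d \<Rightarrow> real"
  assumes iso: "isoradial E rv R th"
begin

lemma cface_in: "d \<in> cdarts E \<Longrightarrow> cface E rv R d \<in> cdarts E"
  using rv_in[OF iso] R_in[OF iso] face_next_in[OF iso]
  by (cases d) (rename_tac k b, case_tac k; case_tac b, auto simp: cface_def cdarts_def face_next_def)

lemma cface_orbit_subset: "d \<in> cdarts E \<Longrightarrow> orbit (cface E rv R) d \<subseteq> cdarts E"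
  by (rule orbit_subset) (use cface_in in auto)

lemma ctarget_eq_corigin_cface: "d \<in> cdarts E \<Longrightarrow> ctarget rv R d = corigin rv R (cface E rv R d)"
  using rv_rv[OF iso] R_face_next[OF iso]
  by (cases d) (rename_tac k b, case_tac k; case_tac b, auto simp: cface_def cdarts_def face_next_def)

text \<open>Each face of \<open>C_\<Gamma>\<close> is one of three kinds: a rectangle around an edge of \<open>\<Gamma>\<close>,
  the face around a vertex of \<open>\<Gamma>\<close>, or the face inside a face of \<open>\<Gamma>\<close>.\<close>

lemma orbit_cface_edge:
  assumes "e \<in> E"
  shows "orbit (cface E rv R) (e, Cos, True) = (\<lambda>x. (x, Cos, True)) ` orbit rv e \<union> (\<lambda>x. (x, Sin, False)) ` orbit rv e"
    and "orbit (cface E rv R) (e, Sin, False) = (\<lambda>x. (x, Cos, True)) ` orbit rv e \<union> (\<lambda>x. (x, Sin, False)) ` orbit rv e"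
proof -
  have "rv ` orbit rv e = orbit rv e" using orbit_rv[OF iso assms] rv_rv[OF iso assms] by auto
  then show "orbit (cface E rv R) (e, Cos, True) = (\<lambda>x. (x, Cos, True)) ` orbit rv e \<union> (\<lambda>x. (x, Sin, False)) ` orbit rv e"
    and "orbit (cface E rv R) (e, Sin, False) = (\<lambda>x. (x, Cos, True)) ` orbit rv e \<union> (\<lambda>x. (x, Sin, False)) ` orbit rv e"
    using orbit_alternating[where f="cface E rv R" and a="\<lambda>x. (x, Cos, True)" and b="\<lambda>x. (x, Sin, False)" and g=rv and x=e]
    by (simp_all add: cface_def)
qed

lemma orbit_cface_vertex:
  assumes "e \<in> E"
  shows "orbit (cface E rv R) (e, Cor, True) = (\<lambda>x. (x, Cor, True)) ` orbit R e \<union> (\<lambda>x. (x, Cos, False)) ` orbit R e"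
    and "orbit (cface E rv R) (e, Cos, False) = (\<lambda>x. (x, Cor, True)) ` orbit R e \<union> (\<lambda>x. (x, Cos, False)) ` orbit R e"
  using orbit_alternating[where f="cface E rv R" and a="\<lambda>x. (x, Cor, True)" and b="\<lambda>x. (x, Cos, False)" and g=R and x=e]
    R_orbit(1)[OF iso assms] by (simp_all add: cface_def)

lemma orbit_cface_face:
  assumes "e \<in> E"
  shows "orbit (cface E rv R) (e, Sin, True) = (\<lambda>x. (x, Sin, True)) ` orbit (face_next E rv R) e \<union> (\<lambda>x. (x, Cor, False)) ` orbit (face_next E rv R) e"
    and "orbit (cface E rv R) (e, Cor, False) = (\<lambda>x. (x, Sin, True)) ` orbit (face_next E rv R) e \<union> (\<lambda>x. (x, Cor, False)) ` orbit (face_next E rv R) e"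
  using orbit_alternating[where f="cface E rv R" and a="\<lambda>x. (x, Sin, True)" and b="\<lambda>x. (x, Cor, False)" and g="face_next E rv R" and x=e]
    face_next_orbit(1)[OF iso assms] by (simp_all add: cface_def face_next_def)

lemma cface_return:
  assumes "d \<in> cdarts E"
  shows "\<exists>p>0. (cface E rv R ^^ p) d = d"
proof -
  obtain e k b where d: "d = (e, k, b)" and e: "e \<in> E" using assms unfolding cdarts_def by auto
  have inj: "inj_on R E" and img: "R ` E \<subseteq> E" using bij_R[OF iso] by (auto simp: bij_betw_def)
  obtain pR where pR: "pR > 0" "(R ^^ pR) e = e"
    using funpow_return[OF finite_darts[OF iso] inj img e] .
  obtain pF where pF: "pF > 0" "(face_next E rv R ^^ pF) e = e"
    using funpow_return[OF finite_darts[OF iso] inj_on_face_next[OF iso] _ e] face_next_in[OF iso] by blast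
  have "(rv ^^ 2) e = e" using rv_rv[OF iso e] by (simp add: numeral_2_eq_2)
  note edge = alternating_return[where f="cface E rv R" and a="\<lambda>x. (x, Cos, True)"
      and b="\<lambda>x. (x, Sin, False)" and g=rv, OF _ _ _ this]
  note vertex = alternating_return[where f="cface E rv R" and a="\<lambda>x. (x, Cor, True)"
      and b="\<lambda>x. (x, Cos, False)" and g=R, OF _ _ pR]
  note face = alternating_return[where f="cface E rv R" and a="\<lambda>x. (x, Sin, True)"
      and b="\<lambda>x. (x, Cor, False)" and g="face_next E rv R", OF _ _ pF]
  show ?thesis
    using edge vertex face d by (cases k; cases b) (simp_all add: cface_def face_next_def)
qed

lemma cface_orbit_permutes:
  assumes d: "d \<in> cdarts E"
  shows "cface E rv R ` orbit (cface E rv R) d = orbit (cface E rv R) d"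
    and "inj_on (cface E rv R) (orbit (cface E rv R) d)"
    and "finite (orbit (cface E rv R) d)"
proof -
  show img: "cface E rv R ` orbit (cface E rv R) d = orbit (cface E rv R) d"
    using cface_return[OF d] image_orbit by metis
  show fin: "finite (orbit (cface E rv R) d)"
    using cface_orbit_subset[OF d] finite_cdarts[OF finite_darts[OF iso]] finite_subset by blast
  show "inj_on (cface E rv R) (orbit (cface E rv R) d)"
    using img by (intro eq_card_imp_inj_on[OF fin]) simp
qed

lemma sum_orbit_R_shift: "e \<in> E \<Longrightarrow> (\<Sum>x\<in>orbit R e. h (R x)) = (\<Sum>x\<in>orbit R e. h x)"
proof -
  assume e: "e \<in> E"
  have "inj_on R (orbit R e)"
    using bij_R[OF iso] R_orbit(2)[OF iso e] by (meson bij_betw_def inj_on_subset)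
  then show ?thesis using sum.reindex[of R "orbit R e" h] R_orbit(1)[OF iso e] by simp
qed

lemma sum_face_orbit_th_R:
  "e \<in> E \<Longrightarrow> (\<Sum>x\<in>orbit (face_next E rv R) e. th (R x)) = (\<Sum>x\<in>orbit (face_next E rv R) e. th x)"
proof -
  assume e: "e \<in> E"
  let ?O = "orbit (face_next E rv R) e"
  have sub: "?O \<subseteq> E" using face_next_orbit(2)[OF iso e] .
  have "inj_on (face_next E rv R) ?O" using inj_on_face_next[OF iso] sub inj_on_subset by blast
  then have "(\<Sum>x\<in>?O. th (R x)) = (\<Sum>x\<in>?O. th (R (face_next E rv R x)))"
    using sum.reindex[of "face_next E rv R" ?O "\<lambda>x. th (R x)"] face_next_orbit(1)[OF iso e] by simp
  also have "\<dots> = (\<Sum>x\<in>?O. th x)"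
    by (rule sum.cong) (use sub R_face_next[OF iso] th_rv[OF iso] in auto)
  finally show ?thesis .
qed

text \<open>Both cone-angle conditions of \<open>\<Sigma>\<close> enter here, through the sum of \<open>\<theta>\<close> around a vertex
  or a face of \<open>\<Gamma>\<close>.\<close>

lemma prod_phase_vertex:
  assumes e: "e \<in> E"
  shows "(\<Prod>x\<in>orbit R e. phase R th (x, Cor)) = (-1) ^ (card (orbit R e) + 1)"
proof -
  let ?O = "orbit R e"
  let ?S = "\<Sum>x\<in>?O. th x"
  have "(\<Prod>x\<in>?O. phase R th (x, Cor)) = (\<Prod>x\<in>?O. (-1) * cis (- (th x + th (R x)) / 2))"
    by simp
  also have "\<dots> = (-1) ^ card ?O * cis (\<Sum>x\<in>?O. - (th x + th (R x)) / 2)"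
    by (simp only: prod.distrib prod_constant cis_sum[OF R_orbit(3)[OF iso e]])
  also have "(\<Sum>x\<in>?O. - (th x + th (R x)) / 2) = - ?S"
    by (simp only: sum_divide_distrib[symmetric] sum_negf sum.distrib sum_orbit_R_shift[OF e]) simp
  also obtain k :: int where "?S = (2 * of_int k + 1) * pi"
    using vertex_cone_angle[OF iso e] by (auto simp: sum_distrib_left[symmetric])
  finally show ?thesis by (simp add: cis_minus_odd_pi)
qed

lemma prod_phase_face:
  assumes e: "e \<in> E"
  shows "(\<Prod>x\<in>orbit (face_next E rv R) e. phase R th (x, Sin))
       * (\<Prod>x\<in>orbit (face_next E rv R) e. inverse (phase R th (x, Cor)))
       = (-1) ^ (card (orbit (face_next E rv R) e) + 1)"
proof -
  let ?O = "orbit (face_next E rv R) e"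
  let ?S = "\<Sum>x\<in>?O. th x"
  let ?m = "card ?O"
  have "(\<Prod>x\<in>?O. inverse (phase R th (x, Cor))) = (\<Prod>x\<in>?O. (-1) * cis ((th x + th (R x)) / 2))"
    by (rule prod.cong) (simp_all add: minus_divide_left add.commute)
  also have "\<dots> = (-1) ^ ?m * cis (\<Sum>x\<in>?O. (th x + th (R x)) / 2)"
    by (simp only: prod.distrib prod_constant cis_sum[OF face_next_orbit(3)[OF iso e]])
  also have "(\<Sum>x\<in>?O. (th x + th (R x)) / 2) = ?S"
    by (simp only: sum_divide_distrib[symmetric] sum.distrib sum_face_orbit_th_R[OF e]) simp
  also obtain k :: int where "?S = real ?m * (pi / 2) + - ((2 * of_int k + 1) * pi)"
  proof -
    obtain k :: int where "(\<Sum>x\<in>?O. pi - 2 * th x) = (2 * of_int k + 1) * (2 * pi)"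
      using face_cone_angle[OF iso e] by blast
    moreover have "(\<Sum>x\<in>?O. pi - 2 * th x) = real ?m * pi - 2 * ?S"
      by (simp add: sum_subtractf sum_distrib_left)
    ultimately show thesis by (intro that[of k]) (simp add: algebra_simps)
  qed
  also have "cis (real ?m * (pi / 2) + - ((2 * of_int k + 1) * pi)) = cis (pi / 2) ^ ?m * cis (- ((2 * of_int k + 1) * pi))"
    by (simp only: cis_mult[symmetric] DeMoivre)
  also have "\<dots> = - (\<i> ^ ?m)" by (simp add: cis_minus_odd_pi)
  finally have "(\<Prod>x\<in>?O. inverse (phase R th (x, Cor))) = - ((- 1) ^ ?m * \<i> ^ ?m)" by simp
  then have "(\<Prod>x\<in>?O. phase R th (x, Sin)) * (\<Prod>x\<in>?O. inverse (phase R th (x, Cor)))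
      = - ((- \<i> * (- 1) * \<i>) ^ ?m)"
    by (simp only: power_mult_distrib) (simp add: mult_ac)
  then show ?thesis by simp
qed

lemma prod_phase_cface:
  assumes d: "d \<in> cdarts E"
  shows "(\<Prod>d'\<in>orbit (cface E rv R) d. dphi (phase R th) d') = (-1) ^ (card (orbit (cface E rv R) d) div 2 + 1)"
proof -
  obtain e k b where db: "d = (e, k, b)" and e: "e \<in> E" using d unfolding cdarts_def by auto
  have edge: "(\<Prod>x\<in>orbit rv e. dphi (phase R th) (x, Cos, True)) * (\<Prod>x\<in>orbit rv e. dphi (phase R th) (x, Sin, False))
      = (-1) ^ (card (orbit rv e) + 1)"
    using orbit_rv[OF iso e] rv_neq[OF iso e] by simp
  have vertex: "(\<Prod>x\<in>orbit R e. dphi (phase R th) (x, Cor, True)) * (\<Prod>x\<in>orbit R e. dphi (phase R th) (x, Cos, False))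
      = (-1) ^ (card (orbit R e) + 1)"
    using prod_phase_vertex[OF e] by simp
  have face: "(\<Prod>x\<in>orbit (face_next E rv R) e. dphi (phase R th) (x, Sin, True))
      * (\<Prod>x\<in>orbit (face_next E rv R) e. dphi (phase R th) (x, Cor, False))
      = (-1) ^ (card (orbit (face_next E rv R) e) + 1)"
    using prod_phase_face[OF e] by simp
  have "finite (orbit rv e)" using orbit_rv[OF iso e] by simp
  note edge' = prod_alternating_sign[OF this _ edge]
    and vertex' = prod_alternating_sign[OF R_orbit(3)[OF iso e] _ vertex]
    and face' = prod_alternating_sign[OF face_next_orbit(3)[OF iso e] _ face]
  show ?thesis
    using db orbit_cface_edge[OF e] orbit_cface_vertex[OF e] orbit_cface_face[OF e] edge' vertex' face'
    by (cases k; cases b) simp_all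
qed

lemma prod_coboundary_cface:
  fixes s :: "'d cvert \<Rightarrow> complex"
  assumes d: "d \<in> cdarts E" and s: "\<And>v. s v \<noteq> 0"
  shows "(\<Prod>d'\<in>orbit (cface E rv R) d. s (ctarget rv R d') / s (corigin rv R d')) = 1"
proof -
  let ?O = "orbit (cface E rv R) d"
  note perm = cface_orbit_permutes[OF d]
  have "(\<Prod>d'\<in>?O. s (ctarget rv R d')) = (\<Prod>d'\<in>?O. s (corigin rv R (cface E rv R d')))"
    by (rule prod.cong) (use cface_orbit_subset[OF d] ctarget_eq_corigin_cface in auto)
  also have "\<dots> = (\<Prod>d'\<in>?O. s (corigin rv R d'))"
    using prod.reindex[OF perm(2), of "\<lambda>d'. s (corigin rv R d')"] perm(1) by simp
  finally show ?thesis using s perm(3) by (simp add: prod_dividef)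
qed

end

section \<open>Holonomy\<close>

lemma hol_dart_cis:
  "hol_dart R th (e, k, True) = - cis (angW R th k e - angB R th k e)"
  "hol_dart R th (e, k, False) = - cis (angB R th k e - angW R th k e)"
proof -
  have "- (pi + b - a) = (a - b) - pi" for a b :: real by simp
  then show "hol_dart R th (e, k, True) = - cis (angW R th k e - angB R th k e)"
    and "hol_dart R th (e, k, False) = - cis (angB R th k e - angW R th k e)"
    by (simp_all only: hol_dart.simps exp_minus_imaginary cis_diff_pi)
qed

lemma hol_dart_phase: "inverse ((dphi (phase R th) d)\<^sup>2) = - hol_dart R th d"
proof -
  obtain e k b where d: "d = (e, k, b)" by (cases d) auto
  have "cis (- (th e + th (R e)) / 2) ^ 2 = cis (- (th e + th (R e)))"
    by (rule cis_half_square)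
  then show ?thesis
    unfolding d by (cases k; cases b) (simp_all del: hol_dart.simps add: hol_dart_cis cis_minus_pi power_mult_distrib power_inverse[symmetric] add.commute)
qed

lemma ctarget_corigin_direction: "ctarget rv R x = corigin rv R y \<Longrightarrow> snd (snd y) = (\<not> snd (snd x))"
proof -
  obtain a k b a' k' b' where "x = (a, k, b)" "y = (a', k', b')" by (cases x; cases y) auto
  then show "ctarget rv R x = corigin rv R y \<Longrightarrow> snd (snd y) = (\<not> snd (snd x))"
    by (cases b; cases b') auto
qed

lemma closed_path_even_length:
  assumes "closed_path E rv R \<gamma>"
  shows "even (length \<gamma>)"
proof (rule ccontr)
  assume odd: "odd (length \<gamma>)"
  let ?b = "\<lambda>i. snd (snd (\<gamma> ! i))"
  have ne: "\<gamma> \<noteq> []"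
    and chain: "\<And>i. Suc i < length \<gamma> \<Longrightarrow> ctarget rv R (\<gamma> ! i) = corigin rv R (\<gamma> ! Suc i)"
    and closed: "ctarget rv R (\<gamma> ! (length \<gamma> - 1)) = corigin rv R (\<gamma> ! 0)"
    using assms by (auto simp: closed_path_def last_conv_nth hd_conv_nth)
  have alternate: "i < length \<gamma> \<Longrightarrow> ?b i = (?b 0 = even i)" for i
  proof (induction i)
    case (Suc i)
    then show ?case using ctarget_corigin_direction[OF chain[of i]] by simp
  qed simp
  show False
    using ctarget_corigin_direction[OF closed] alternate[of "length \<gamma> - 1"] odd ne by simp
qed

lemma inverse_square_prod_list:
  "inverse ((prod_list (map f xs))\<^sup>2) = prod_list (map (\<lambda>d. inverse ((f d)\<^sup>2)) xs)" for f :: "'a \<Rightarrow> complex"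
  by (induction xs) (simp_all add: power_mult_distrib)

lemma prod_list_map_uminus: "prod_list (map (\<lambda>d. - f d) xs) = (-1) ^ length xs * prod_list (map f xs)"
  for f :: "'a \<Rightarrow> complex"
  by (induction xs) simp_all

lemma path_hol_phase:
  assumes "closed_path E rv R \<gamma>"
  shows "inverse (path_phi (phase R th) \<gamma> ^ 2) = path_hol R th \<gamma>"
  unfolding path_phi_def path_hol_def inverse_square_prod_list hol_dart_phase prod_list_map_uminus
  using closed_path_even_length[OF assms] by simp

section \<open>Existence\<close>

definition spin_of :: "'d set \<Rightarrow> ('d \<Rightarrow> 'd) \<Rightarrow> ('d \<Rightarrow> real) \<Rightarrow> ('d \<times> ckind \<Rightarrow> real) \<Rightarrow> 'd \<times> ckind \<Rightarrow> complex" where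
  "spin_of E R th \<omega> = (\<lambda>(e, k). if e \<in> E then phase R th (e, k) * complex_of_real (\<omega> (e, k)) else undefined)"

lemma kasteleyn_sign: "kasteleyn E rv R \<omega> \<Longrightarrow> e \<in> E \<Longrightarrow> \<omega> (e, k) = 1 \<or> \<omega> (e, k) = -1"
  unfolding kasteleyn_def by auto

lemma dphi_spin_of:
  assumes "e \<in> E" "\<omega> (e, k) = 1 \<or> \<omega> (e, k) = -1"
  shows "dphi (spin_of E R th \<omega>) (e, k, b) = complex_of_real (\<omega> (e, k)) * dphi (phase R th) (e, k, b)"
  using assms by (cases b) (auto simp: spin_of_def)

lemma square_dphi_spin_of:
  assumes "\<forall>e\<in>E. \<forall>k. \<omega> (e, k) = 1 \<or> \<omega> (e, k) = -1" "d \<in> cdarts E"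
  shows "(dphi (spin_of E R th \<omega>) d)\<^sup>2 = (dphi (phase R th) d)\<^sup>2"
proof -
  obtain e k b where d: "d = (e, k, b)" and e: "e \<in> E" using assms(2) unfolding cdarts_def by auto
  have sign: "\<omega> (e, k) = 1 \<or> \<omega> (e, k) = -1" using assms(1) e by blast
  then show ?thesis
    using dphi_spin_of[where E=E and \<omega>=\<omega> and R=R and th=th and b=b, OF e sign] unfolding d by (auto simp: power_mult_distrib)
qed

lemma path_hol_spin_of:
  assumes "\<forall>e\<in>E. \<forall>k. \<omega> (e, k) = 1 \<or> \<omega> (e, k) = -1" "closed_path E rv R \<gamma>"
  shows "inverse (path_phi (spin_of E R th \<omega>) \<gamma> ^ 2) = path_hol R th \<gamma>"
proof -
  have "set \<gamma> \<subseteq> cdarts E" using assms(2) unfolding closed_path_def by blast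
  then have "inverse (path_phi (spin_of E R th \<omega>) \<gamma> ^ 2) = inverse (path_phi (phase R th) \<gamma> ^ 2)"
    unfolding path_phi_def inverse_square_prod_list
    by (intro arg_cong[where f=prod_list] map_cong) (auto simp: square_dphi_spin_of[OF assms(1)])
  then show ?thesis using path_hol_phase[OF assms(2)] by simp
qed

lemma of_real_sign_mult_eq_1_iff:
  "complex_of_real x * (-1) ^ n = 1 \<longleftrightarrow> x = (-1) ^ n"
proof -
  have square: "((-1) ^ n) * ((-1) ^ n) = (1::complex)" by (simp flip: power_mult_distrib)
  have "complex_of_real x * (-1) ^ n = 1 \<longleftrightarrow> complex_of_real x = (-1) ^ n"
    by (metis square mult.assoc mult_1_right mult_1_left)
  then show ?thesis by (metis of_real_eq_iff of_real_1 of_real_minus of_real_power)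
qed

text \<open>The Dirac identity at the white vertex \<open>\<psi>\<^sub>W(e)\<close>, divided by \<open>exp (-\<i> \<theta> e / 2)\<close>: a comparison
  of the coefficients of \<open>g\<close> at the three black neighbours \<open>e\<close>, \<open>rv e\<close> and \<open>R e\<close>.\<close>

definition dirac_at :: "('d \<Rightarrow> 'd) \<Rightarrow> ('d \<Rightarrow> 'd) \<Rightarrow> ('d \<Rightarrow> real) \<Rightarrow> ('d \<times> ckind \<Rightarrow> real)
    \<Rightarrow> ('d \<times> ckind \<Rightarrow> complex) \<Rightarrow> 'd \<Rightarrow> bool" where
  "dirac_at rv R th \<omega> \<phi> e \<longleftrightarrow> (\<forall>g.
      complex_of_real (\<omega> (e, Cos) * cos (th e)) * g e + complex_of_real (\<omega> (e, Sin) * sin (th e)) * g (rv e)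
        + complex_of_real (\<omega> (e, Cor)) * cis ((th e - th (R e)) / 2) * g (R e)
      = \<phi> (e, Cos) * complex_of_real (cos (th e)) * g e + \<i> * \<phi> (e, Sin) * complex_of_real (sin (th e)) * g (rv e)
        - cis (th e) * \<phi> (e, Cor) * g (R e))"

context
  fixes E :: "'d set" and rv R :: "'d \<Rightarrow> 'd" and th :: "'d \<Rightarrow> real"
  assumes iso: "isoradial E rv R th"
begin

lemma prod_cface_spin_of_eq_1_iff:
  assumes signs: "\<forall>e\<in>E. \<forall>k. \<omega> (e, k) = 1 \<or> \<omega> (e, k) = -1" and d: "d \<in> cdarts E"
  shows "(\<Prod>d'\<in>orbit (cface E rv R) d. dphi (spin_of E R th \<omega>) d') = 1
     \<longleftrightarrow> (\<Prod>d'\<in>orbit (cface E rv R) d. \<omega> (cedge d')) = (-1) ^ (card (orbit (cface E rv R) d) div 2 + 1)"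
proof -
  let ?O = "orbit (cface E rv R) d"
  have "(\<Prod>d'\<in>?O. dphi (spin_of E R th \<omega>) d') = (\<Prod>d'\<in>?O. complex_of_real (\<omega> (cedge d')) * dphi (phase R th) d')"
  proof (rule prod.cong)
    fix d' assume "d' \<in> ?O"
    then obtain e k b where d': "d' = (e, k, b)" and e: "e \<in> E"
      using cface_orbit_subset[OF iso d] unfolding cdarts_def by auto
    have "\<omega> (e, k) = 1 \<or> \<omega> (e, k) = -1" using signs e by blast
    then show "dphi (spin_of E R th \<omega>) d' = complex_of_real (\<omega> (cedge d')) * dphi (phase R th) d'"
      unfolding d' using dphi_spin_of[where E=E and \<omega>=\<omega>, OF e] by simp
  qed simp
  also have "\<dots> = complex_of_real (\<Prod>d'\<in>?O. \<omega> (cedge d')) * (-1) ^ (card ?O div 2 + 1)"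
    by (simp add: prod.distrib prod_phase_cface[OF iso d])
  finally have eq: "(\<Prod>d'\<in>?O. dphi (spin_of E R th \<omega>) d')
      = complex_of_real (\<Prod>d'\<in>?O. \<omega> (cedge d')) * (-1) ^ (card ?O div 2 + 1)" .
  show ?thesis unfolding eq of_real_sign_mult_eq_1_iff ..
qed

lemma spin_structure_spin_of:
  assumes K: "kasteleyn E rv R \<omega>"
  shows "spin_structure E rv R th (spin_of E R th \<omega>)"
proof -
  have signs: "\<forall>e\<in>E. \<forall>k. \<omega> (e, k) = 1 \<or> \<omega> (e, k) = -1" using K unfolding kasteleyn_def by blast
  have "norm (spin_of E R th \<omega> (e, k)) = 1" if "e \<in> E" for e k
  proof -
    have "\<omega> (e, k) = 1 \<or> \<omega> (e, k) = -1" using signs that by blast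
    then show ?thesis using that by (auto simp: spin_of_def norm_mult)
  qed
  moreover have "spin_of E R th \<omega> \<in> extensional (E \<times> UNIV)"
    by (auto simp: spin_of_def extensional_def)
  ultimately show ?thesis
    using K prod_cface_spin_of_eq_1_iff[OF signs] path_hol_spin_of[OF signs]
    unfolding spin_structure_def kasteleyn_def by blast
qed

lemma dirac_identity_iff_dirac_at:
  assumes pos: "\<forall>e\<in>E. 0 < th e \<and> th e < pi / 2"
  shows "dirac_identity E rv R th \<omega> \<phi> \<longleftrightarrow> (\<forall>e\<in>E. dirac_at rv R th \<omega> \<phi> e)"
proof -
  have "kast_op rv R th \<omega> (\<lambda>x. exp (- \<i> * complex_of_real (th x) / 2) * g x) e
      = exp (- \<i> * complex_of_real (th e) / 2) * complex_of_real (mu th e) * dbar rv R th \<phi> g e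
      \<longleftrightarrow> complex_of_real (\<omega> (e, Cos) * cos (th e)) * g e + complex_of_real (\<omega> (e, Sin) * sin (th e)) * g (rv e)
          + complex_of_real (\<omega> (e, Cor)) * cis ((th e - th (R e)) / 2) * g (R e)
        = \<phi> (e, Cos) * complex_of_real (cos (th e)) * g e + \<i> * \<phi> (e, Sin) * complex_of_real (sin (th e)) * g (rv e)
          - cis (th e) * \<phi> (e, Cor) * g (R e)" (is "?lhs = ?rhs \<longleftrightarrow> ?L = ?R") if e: "e \<in> E" for g e
  proof -
    have "0 < sin (2 * th e)" using pos e by (intro sin_gt_zero) auto
    then have mu: "mu th e \<noteq> 0" unfolding mu_def by simp
    have "cis (- th (R e) / 2) = cis (- th e / 2) * cis ((th e - th (R e)) / 2)"
      by (simp add: cis_mult diff_divide_distrib)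
    then have "?lhs = cis (- th e / 2) * ?L"
      unfolding kast_op_def exp_minus_imaginary_half using th_rv[OF iso e]
      by (simp add: UNIV_ckind algebra_simps)
    moreover have "?rhs = cis (- th e / 2) * ?R"
      unfolding dbar_def exp_minus_imaginary_half exp_imaginary using mu by simp
    ultimately show ?thesis by simp
  qed
  then show ?thesis unfolding dirac_identity_def dirac_at_def by blast
qed

lemma dirac_identity_spin_of:
  assumes pos: "\<forall>e\<in>E. 0 < th e \<and> th e < pi / 2"
  shows "dirac_identity E rv R th \<omega> (spin_of E R th \<omega>)"
  unfolding dirac_identity_iff_dirac_at[OF pos] dirac_at_def
proof (intro allI ballI)
  fix g e assume "e \<in> E"
  have "cis (th e) * cis (- (th e + th (R e)) / 2) = cis ((th e - th (R e)) / 2)"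
    by (simp add: cis_mult field_simps)
  with \<open>e \<in> E\<close> show "complex_of_real (\<omega> (e, Cos) * cos (th e)) * g e + complex_of_real (\<omega> (e, Sin) * sin (th e)) * g (rv e)
        + complex_of_real (\<omega> (e, Cor)) * cis ((th e - th (R e)) / 2) * g (R e)
      = spin_of E R th \<omega> (e, Cos) * complex_of_real (cos (th e)) * g e
        + \<i> * spin_of E R th \<omega> (e, Sin) * complex_of_real (sin (th e)) * g (rv e)
        - cis (th e) * spin_of E R th \<omega> (e, Cor) * g (R e)"
    by (simp add: spin_of_def algebra_simps)
qed

end

section \<open>Uniqueness\<close>

text \<open>If \<open>b = \<epsilon> \<i> u a\<close> with \<open>\<epsilon> = \<plusminus>1\<close>, the linear equation reads \<open>-(1 + \<epsilon> s) u a = w\<^sub>S s + w\<^sub>C\<close>;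
  comparing moduli forces \<open>w\<^sub>S = \<epsilon> w\<^sub>C\<close> and then \<open>u a = -w\<^sub>C\<close>.\<close>

lemma sign_phase_system_unique:
  fixes a b u :: complex and s wS wC :: real
  assumes na: "norm a = 1" and nu: "norm u = 1" and s: "0 < s" "s < 1"
    and wS: "wS = 1 \<or> wS = -1" and wC: "wC = 1 \<or> wC = -1"
    and lin: "\<i> * complex_of_real s * b - u * a = complex_of_real (wS * s + wC)"
    and sq: "b ^ 2 = - (u ^ 2 * a ^ 2)"
  shows "a = - complex_of_real wC * inverse u \<and> b = - \<i> * complex_of_real wS"
proof -
  have "(b - \<i> * u * a) * (b + \<i> * u * a) = 0"
    using sq by (simp add: algebra_simps power2_eq_square)
  then consider "b = \<i> * u * a" | "b = - (\<i> * u * a)"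
    by (auto simp: eq_neg_iff_add_eq_0)
  then obtain \<epsilon> :: real where \<epsilon>: "\<epsilon> = 1 \<or> \<epsilon> = -1" and b: "b = complex_of_real \<epsilon> * \<i> * u * a"
    by cases (auto intro: that[of 1] that[of "-1"])
  have "complex_of_real (1 + \<epsilon> * s) * (u * a) = - (\<i> * complex_of_real s * b - u * a)"
    using \<epsilon> unfolding b by (auto simp: algebra_simps)
  then have ua: "complex_of_real (1 + \<epsilon> * s) * (u * a) = - complex_of_real (wS * s + wC)"
    unfolding lin .
  have pos: "0 < 1 + \<epsilon> * s" using \<epsilon> s by auto
  have "\<bar>1 + \<epsilon> * s\<bar> * (norm u * norm a) = \<bar>wS * s + wC\<bar>"
    using arg_cong[OF ua, of norm] by (simp only: norm_mult norm_minus_cancel norm_of_real)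
  then have "1 + \<epsilon> * s = \<bar>wS * s + wC\<bar>" using pos na nu by simp
  then have wS_eq: "wS = \<epsilon> * wC" using \<epsilon> wS wC s by auto
  then have "complex_of_real (1 + \<epsilon> * s) * (u * a) = complex_of_real (1 + \<epsilon> * s) * - complex_of_real wC"
    using ua \<epsilon> by (auto simp: algebra_simps)
  moreover have "complex_of_real (1 + \<epsilon> * s) \<noteq> 0" using pos by (simp only: of_real_eq_0_iff)
  ultimately have ua_eq: "u * a = - complex_of_real wC" by (metis mult_left_cancel)
  have "u \<noteq> 0" using nu by auto
  then have "a = - complex_of_real wC * inverse u" using ua_eq by (simp add: field_simps)
  moreover have "b = complex_of_real \<epsilon> * \<i> * (u * a)" unfolding b by (simp add: mult.assoc)
  then have "b = - \<i> * complex_of_real wS" unfolding ua_eq wS_eq by simp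
  ultimately show ?thesis ..
qed

context
  fixes E :: "'d set" and rv R :: "'d \<Rightarrow> 'd" and th :: "'d \<Rightarrow> real"
  assumes iso: "isoradial E rv R th"
begin

text \<open>When \<open>R e = rv e\<close> the edges \<open>(e, Sin)\<close> and \<open>(e, Cor)\<close> join the same two vertices, and the
  holonomy condition along the resulting 2-cycle is the extra equation needed below.\<close>

lemma spin_structure_two_cycle:
  assumes S: "spin_structure E rv R th \<phi>" and e: "e \<in> E" and loop: "R e = rv e"
  shows "(\<phi> (e, Sin))\<^sup>2 = - ((cis (th e))\<^sup>2 * (\<phi> (e, Cor))\<^sup>2)"
proof -
  let ?\<gamma> = "[(e, Sin, True), (e, Cor, False)]"
  have "closed_path E rv R ?\<gamma>"
    unfolding closed_path_def cdarts_def using e loop by (auto simp: nth_Cons split: nat.splits)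
  then have "inverse (path_phi \<phi> ?\<gamma> ^ 2) = path_hol R th ?\<gamma>"
    using S unfolding spin_structure_def by blast
  moreover have "path_hol R th ?\<gamma> = - cis (- (2 * th e))"
    using th_rv[OF iso e] loop by (simp add: path_hol_def hol_dart_cis cis_minus_pi del: hol_dart.simps)
  moreover have "\<phi> (e, Sin) \<noteq> 0" "\<phi> (e, Cor) \<noteq> 0"
    using S e unfolding spin_structure_def by (metis norm_zero zero_neq_one)+
  ultimately have "(\<phi> (e, Cor))\<^sup>2 = - cis (- (2 * th e)) * (\<phi> (e, Sin))\<^sup>2"
    by (simp add: path_phi_def field_simps power_mult_distrib power_inverse)
  moreover have "(cis (th e))\<^sup>2 * cis (- (2 * th e)) = 1" by (simp add: DeMoivre cis_mult)
  ultimately show ?thesis by (metis (no_types, lifting) mult.assoc mult_minus_left mult_minus_right minus_minus mult_1)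
qed

lemma dirac_at_Cos:
  assumes D: "dirac_at rv R th \<omega> \<phi> e" and e: "e \<in> E" and th: "0 < th e" "th e < pi / 2"
  shows "\<phi> (e, Cos) = complex_of_real (\<omega> (e, Cos))"
proof -
  have "cos (th e) \<noteq> 0" using th by (intro order.strict_implies_not_eq[symmetric] cos_gt_zero_pi) auto
  then show ?thesis
    using D[unfolded dirac_at_def, rule_format, of "\<lambda>x. if x = e then 1 else 0"]
      rv_neq[OF iso e] R_no_fixpoint[OF iso th e] by simp
qed

lemma dirac_at_Sin_Cor:
  assumes D: "dirac_at rv R th \<omega> \<phi> e" and e: "e \<in> E" and th: "0 < th e" "th e < pi / 2"
    and no_loop: "R e \<noteq> rv e"
  shows "\<phi> (e, Sin) = - \<i> * complex_of_real (\<omega> (e, Sin))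
    \<and> \<phi> (e, Cor) = - cis (- (th e + th (R e)) / 2) * complex_of_real (\<omega> (e, Cor))"
proof
  note test = D[unfolded dirac_at_def, rule_format]
  have neq: "rv e \<noteq> e" "R e \<noteq> e" using rv_neq[OF iso e] R_no_fixpoint[OF iso th e] by auto
  have "0 < sin (th e)" using th by (intro sin_gt_zero) auto
  then show "\<phi> (e, Sin) = - \<i> * complex_of_real (\<omega> (e, Sin))"
    using test[of "\<lambda>x. if x = rv e then 1 else 0"] neq no_loop by (simp add: field_simps)
  have "cis ((th e - th (R e)) / 2) = cis (th e) * cis (- (th e + th (R e)) / 2)"
    by (simp add: cis_mult field_simps)
  then have "cis (th e) * \<phi> (e, Cor) = cis (th e) * (- cis (- (th e + th (R e)) / 2) * complex_of_real (\<omega> (e, Cor)))"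
    using test[of "\<lambda>x. if x = R e then 1 else 0"] neq no_loop by (simp add: algebra_simps)
  then show "\<phi> (e, Cor) = - cis (- (th e + th (R e)) / 2) * complex_of_real (\<omega> (e, Cor))"
    by (simp only: mult_left_cancel[OF cis_neq_zero])
qed

lemma dirac_at_two_cycle:
  assumes D: "dirac_at rv R th \<omega> \<phi> e" and e: "e \<in> E" and th: "0 < th e" "th e < pi / 2"
    and K: "kasteleyn E rv R \<omega>" and S: "spin_structure E rv R th \<phi>" and loop: "R e = rv e"
  shows "\<phi> (e, Sin) = - \<i> * complex_of_real (\<omega> (e, Sin))
    \<and> \<phi> (e, Cor) = - cis (- (th e + th (R e)) / 2) * complex_of_real (\<omega> (e, Cor))"
proof -
  have thR: "th (R e) = th e" using loop th_rv[OF iso e] by simp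
  have sin: "0 < sin (th e)" "sin (th e) < 1"
    using th sin_monotone_2pi[of "th e" "pi / 2"] by (auto intro!: sin_gt_zero)
  have "\<i> * complex_of_real (sin (th e)) * \<phi> (e, Sin) - cis (th e) * \<phi> (e, Cor)
      = complex_of_real (\<omega> (e, Sin) * sin (th e) + \<omega> (e, Cor))"
    using D[unfolded dirac_at_def, rule_format, of "\<lambda>x. if x = rv e then 1 else 0"] rv_neq[OF iso e] loop thR
    by (simp add: algebra_simps)
  from sign_phase_system_unique[OF _ _ sin kasteleyn_sign[OF K e] kasteleyn_sign[OF K e] this
      spin_structure_two_cycle[OF S e loop]]
  have "\<phi> (e, Cor) = - complex_of_real (\<omega> (e, Cor)) * inverse (cis (th e))
      \<and> \<phi> (e, Sin) = - \<i> * complex_of_real (\<omega> (e, Sin))"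
    using S e unfolding spin_structure_def by simp
  then show ?thesis using thR by simp
qed

lemma dirac_identity_unique:
  assumes pos: "\<forall>e\<in>E. 0 < th e \<and> th e < pi / 2"
    and K: "kasteleyn E rv R \<omega>" and S: "spin_structure E rv R th \<phi>" and D: "dirac_identity E rv R th \<omega> \<phi>"
  shows "\<phi> = spin_of E R th \<omega>"
proof
  fix x :: "'d \<times> ckind"
  obtain e k where x: "x = (e, k)" by (cases x)
  show "\<phi> x = spin_of E R th \<omega> x"
  proof (cases "e \<in> E")
    case False
    then show ?thesis using S unfolding x spin_structure_def extensional_def spin_of_def by auto
  next
    case e: True
    have th: "0 < th e" "th e < pi / 2" using pos e by auto
    have De: "dirac_at rv R th \<omega> \<phi> e" using D e dirac_identity_iff_dirac_at[OF iso pos] by blast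
    have "\<phi> (e, Sin) = - \<i> * complex_of_real (\<omega> (e, Sin))
      \<and> \<phi> (e, Cor) = - cis (- (th e + th (R e)) / 2) * complex_of_real (\<omega> (e, Cor))"
      using dirac_at_Sin_Cor[OF De e th] dirac_at_two_cycle[OF De e th K S] by blast
    then show ?thesis
      using dirac_at_Cos[OF De e th] e unfolding x spin_of_def by (cases k) (auto simp: mult.commute)
  qed
qed

end

section \<open>Equivalent Kasteleyn orientations and cohomologous spin structures\<close>

lemma kast_equiv_imp_cohomologous:
  assumes "kast_equiv E rv R \<omega>1 \<omega>2"
  shows "cohomologous E rv R (spin_of E R th \<omega>1) (spin_of E R th \<omega>2)"
proof -
  obtain s :: "'a cvert \<Rightarrow> real" where s: "\<And>v. s v = 1 \<or> s v = -1"
    and \<omega>2: "\<And>e k. e \<in> E \<Longrightarrow> \<omega>2 (e, k) = s (Wh e) * \<omega>1 (e, k) * s (Bl (ctgt rv R k e))"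
    using assms unfolding kast_equiv_def by blast
  show ?thesis unfolding cohomologous_def
  proof (intro exI[of _ "\<lambda>v. complex_of_real (s v)"] conjI allI ballI)
    show "norm (complex_of_real (s v)) = 1" for v using s[of v] by auto
    show "spin_of E R th \<omega>2 (e, k)
        = spin_of E R th \<omega>1 (e, k) * complex_of_real (s (Bl (ctgt rv R k e))) / complex_of_real (s (Wh e))"
      if "e \<in> E" for e k
      using that \<omega>2[OF that, of k] s[of "Wh e"] by (auto simp: spin_of_def)
  qed
qed

text \<open>An odd sign function on the circle turns a unimodular gauge between two \<open>spin_of\<close> cocycles
  into a sign gauge, without choosing a base point in each connected component.\<close>

definition half_sign :: "complex \<Rightarrow> real" where
  "half_sign z = (if 0 < Im z \<or> (Im z = 0 \<and> 0 < Re z) then 1 else -1)"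

lemma half_sign_uminus: "z \<noteq> 0 \<Longrightarrow> half_sign (- z) = - half_sign z"
  by (auto simp: half_sign_def complex_eq_iff)

lemma cohomologous_imp_kast_equiv:
  assumes K1: "kasteleyn E rv R \<omega>1" and K2: "kasteleyn E rv R \<omega>2"
    and coh: "cohomologous E rv R (spin_of E R th \<omega>1) (spin_of E R th \<omega>2)"
  shows "kast_equiv E rv R \<omega>1 \<omega>2"
proof -
  obtain f :: "'a cvert \<Rightarrow> complex" where f: "\<And>v. norm (f v) = 1"
    and gauge: "\<And>e k. e \<in> E \<Longrightarrow> spin_of E R th \<omega>2 (e, k)
        = spin_of E R th \<omega>1 (e, k) * f (Bl (ctgt rv R k e)) / f (Wh e)"
    using coh unfolding cohomologous_def by blast
  define s where "s v = half_sign (f v)" for v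
  show ?thesis unfolding kast_equiv_def
  proof (intro exI[of _ s] conjI allI ballI)
    show "s v = 1 \<or> s v = -1" for v unfolding s_def half_sign_def by simp
    fix e k assume e: "e \<in> E"
    have f0: "f v \<noteq> 0" for v using f[of v] by auto
    have "phase R th (e, k) * complex_of_real (\<omega>2 (e, k)) * f (Wh e)
        = phase R th (e, k) * (complex_of_real (\<omega>1 (e, k)) * f (Bl (ctgt rv R k e)))"
      using gauge[OF e, of k] e f0[of "Wh e"] by (simp add: spin_of_def field_simps)
    then have "f (Bl (ctgt rv R k e)) = complex_of_real (\<omega>1 (e, k) * \<omega>2 (e, k)) * f (Wh e)"
      using kasteleyn_sign[OF K1 e, of k] phase_nonzero[of R th e k]
      by (auto simp: mult.assoc)
    then have "s (Bl (ctgt rv R k e)) = \<omega>1 (e, k) * \<omega>2 (e, k) * s (Wh e)"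
      using kasteleyn_sign[OF K1 e, of k] kasteleyn_sign[OF K2 e, of k] f0[of "Wh e"]
      unfolding s_def by (auto simp: half_sign_uminus)
    then show "\<omega>2 (e, k) = s (Wh e) * \<omega>1 (e, k) * s (Bl (ctgt rv R k e))"
      using kasteleyn_sign[OF K1 e, of k] kasteleyn_sign[OF K2 e, of k] unfolding s_def half_sign_def by auto
  qed
qed

section \<open>Every spin structure arises from a Kasteleyn orientation\<close>

inductive walk :: "'d set \<Rightarrow> ('d \<Rightarrow> 'd) \<Rightarrow> ('d \<Rightarrow> 'd) \<Rightarrow> 'd cvert \<Rightarrow> 'd cdart list \<Rightarrow> 'd cvert \<Rightarrow> bool"
  for E rv R where
  walk_Nil: "walk E rv R v [] v"
| walk_snoc: "walk E rv R u p v \<Longrightarrow> d \<in> cdarts E \<Longrightarrow> corigin rv R d = v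
    \<Longrightarrow> walk E rv R u (p @ [d]) (ctarget rv R d)"

lemma walk_darts: "walk E rv R u p v \<Longrightarrow> set p \<subseteq> cdarts E"
  by (induction rule: walk.induct) auto

lemma walk_chain:
  assumes "walk E rv R u p v" "p \<noteq> []"
  shows "corigin rv R (hd p) = u" "ctarget rv R (last p) = v"
    "\<And>i. Suc i < length p \<Longrightarrow> ctarget rv R (p ! i) = corigin rv R (p ! Suc i)"
proof -
  have "p \<noteq> [] \<longrightarrow> corigin rv R (hd p) = u \<and> ctarget rv R (last p) = v \<and>
       (\<forall>i. Suc i < length p \<longrightarrow> ctarget rv R (p ! i) = corigin rv R (p ! Suc i))"
    using assms(1)
  proof (induction rule: walk.induct)
    case (walk_snoc u p v d)
    show ?case
    proof (cases "p = []")
      case False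
      have "ctarget rv R ((p @ [d]) ! i) = corigin rv R ((p @ [d]) ! Suc i)"
        if "Suc i < length (p @ [d])" for i
      proof (cases "Suc i < length p")
        case True then show ?thesis using walk_snoc False by (simp add: nth_append)
      next
        case last: False
        then have "i = length p - 1" using that by simp
        then have "(p @ [d]) ! i = last p" "(p @ [d]) ! Suc i = d"
          using False by (simp_all add: nth_append last_conv_nth)
        then show ?thesis using walk_snoc False by simp
      qed
      then show ?thesis using walk_snoc False by simp
    qed (use walk_snoc in \<open>auto elim: walk.cases\<close>)
  qed simp
  then show "corigin rv R (hd p) = u" "ctarget rv R (last p) = v"
    "\<And>i. Suc i < length p \<Longrightarrow> ctarget rv R (p ! i) = corigin rv R (p ! Suc i)"
    using assms(2) by auto
qed

lemma walk_closed_path: "walk E rv R u p u \<Longrightarrow> p \<noteq> [] \<Longrightarrow> closed_path E rv R p"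
  using walk_darts walk_chain unfolding closed_path_def by metis

lemma walk_append: "walk E rv R v q w \<Longrightarrow> walk E rv R u p v \<Longrightarrow> walk E rv R u (p @ q) w"
proof (induction rule: walk.induct)
  case (walk_snoc v q w d)
  then show ?case using walk.walk_snoc[of E rv R u "p @ q" w d] by simp
qed simp

lemma walk_rev: "walk E rv R u p v \<Longrightarrow> walk E rv R v (rev (map crev p)) u"
proof (induction rule: walk.induct)
  case (walk_snoc u p v d)
  obtain e k b where "d = (e, k, b)" by (cases d)
  then have "walk E rv R (ctarget rv R d) [crev d] v"
    using walk.walk_snoc[OF walk.walk_Nil, of "crev d" E rv R] walk_snoc(2,3)
    by (cases b) (auto simp: cdarts_def)
  from walk_append[OF walk_snoc(4) this] show ?case by simp
qed (simp add: walk.walk_Nil)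

lemma dphi_crev: "dphi f (crev d) = inverse (dphi f d)"
  by (cases d) (rename_tac b, case_tac b, simp_all)

lemma norm_prod_list_walk:
  fixes \<Psi> :: "'d cdart \<Rightarrow> complex"
  assumes "\<And>d. d \<in> cdarts E \<Longrightarrow> norm (\<Psi> d) = 1" "walk E rv R u p v"
  shows "norm (prod_list (map \<Psi> p)) = 1"
  using walk_darts[OF assms(2)] assms(1) by (induction p) (auto simp: norm_mult)

lemma prod_list_walks_eq:
  fixes \<Psi> :: "'d cdart \<Rightarrow> complex"
  assumes inv: "\<And>d. d \<in> cdarts E \<Longrightarrow> \<Psi> (crev d) = inverse (\<Psi> d)"
    and norm: "\<And>d. d \<in> cdarts E \<Longrightarrow> norm (\<Psi> d) = 1"
    and closed: "\<And>\<gamma>. closed_path E rv R \<gamma> \<Longrightarrow> prod_list (map \<Psi> \<gamma>) = 1"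
    and p: "walk E rv R u p v" and q: "walk E rv R u q v"
  shows "prod_list (map \<Psi> p) = prod_list (map \<Psi> q)"
proof -
  let ?P = "\<lambda>p. prod_list (map \<Psi> p)"
  have "?P (rev (map crev q)) = prod_list (map (\<lambda>d. inverse (\<Psi> d)) q)"
    using walk_darts[OF q] inv by (induction q) (auto simp: mult.commute)
  also have "\<dots> = inverse (?P q)" by (induction q) simp_all
  finally have "?P (p @ rev (map crev q)) = ?P p * inverse (?P q)" by simp
  also have "?P (p @ rev (map crev q)) = 1"
  proof (cases "p @ rev (map crev q) = []")
    case False
    then show ?thesis using closed walk_closed_path[OF walk_append[OF walk_rev[OF q] p]] by blast
  qed simp
  finally have "?P p * inverse (?P q) = 1" by simp
  moreover have "?P q \<noteq> 0" using norm_prod_list_walk[where \<Psi>=\<Psi>, OF norm q] by auto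
  ultimately show ?thesis by (simp add: field_simps)
qed

lemma closed_cochain_potential:
  fixes \<Psi> :: "'d cdart \<Rightarrow> complex"
  assumes inv: "\<And>d. d \<in> cdarts E \<Longrightarrow> \<Psi> (crev d) = inverse (\<Psi> d)"
    and norm: "\<And>d. d \<in> cdarts E \<Longrightarrow> norm (\<Psi> d) = 1"
    and closed: "\<And>\<gamma>. closed_path E rv R \<gamma> \<Longrightarrow> prod_list (map \<Psi> \<gamma>) = 1"
    and reach: "\<And>d. d \<in> cdarts E \<Longrightarrow> \<exists>p. walk E rv R v0 p (corigin rv R d)"
  obtains h where "\<And>v. norm (h v) = 1"
    and "\<And>d. d \<in> cdarts E \<Longrightarrow> h (ctarget rv R d) = h (corigin rv R d) * \<Psi> d"
proof -
  let ?P = "\<lambda>p. prod_list (map \<Psi> p)"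
  define h where "h v = (if \<exists>p. walk E rv R v0 p v then ?P (SOME p. walk E rv R v0 p v) else 1)" for v
  have h_walk: "h v = ?P p" if "walk E rv R v0 p v" for p v
    using that prod_list_walks_eq[where \<Psi>=\<Psi>, OF inv norm closed someI[of "\<lambda>p. walk E rv R v0 p v"]]
    unfolding h_def by auto
  show thesis
  proof
    show "norm (h v) = 1" for v
    proof (cases "\<exists>p. walk E rv R v0 p v")
      case True
      then obtain p where "walk E rv R v0 p v" by blast
      then show ?thesis using h_walk norm_prod_list_walk[where \<Psi>=\<Psi>, OF norm] by metis
    qed (simp add: h_def)
    show "h (ctarget rv R d) = h (corigin rv R d) * \<Psi> d" if d: "d \<in> cdarts E" for d
    proof -
      obtain p where p: "walk E rv R v0 p (corigin rv R d)" using reach[OF d] by blast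
      then have "walk E rv R v0 (p @ [d]) (ctarget rv R d)" using walk.walk_snoc[OF p d] by simp
      then show ?thesis using h_walk[OF p] h_walk by simp
    qed
  qed
qed

lemma walk_to_every_vertex:
  assumes iso: "isoradial E rv R th" and e0: "e0 \<in> E" and d: "d \<in> cdarts E"
  shows "\<exists>p. walk E rv R (Wh e0) p (corigin rv R d)"
proof -
  have white: "\<exists>p. walk E rv R (Wh e0) p (Wh e)" if e: "e \<in> E" for e
    using darts_connected[OF iso e0 e]
  proof (induction rule: rtrancl_induct)
    case base show ?case by (rule exI, rule walk.walk_Nil)
  next
    case (step x z)
    then obtain p where p: "walk E rv R (Wh e0) p (Wh x)" and x: "x \<in> E" and "z = R x \<or> z = rv x" by blast
    then consider "z = R x" "(x, Cor, True) \<in> cdarts E" "(z, Cos, False) \<in> cdarts E"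
      | "z = rv x" "(x, Sin, True) \<in> cdarts E" "(z, Cos, False) \<in> cdarts E"
      using R_in[OF iso x] rv_in[OF iso x] by (auto simp: cdarts_def)
    then show ?case
    proof cases
      case 1
      then show ?thesis using walk.walk_snoc[OF walk.walk_snoc[OF p 1(2)] 1(3)] by auto
    next
      case 2
      then show ?thesis using walk.walk_snoc[OF walk.walk_snoc[OF p 2(2)] 2(3)] by auto
    qed
  qed
  obtain e k b where d: "d = (e, k, b)" and e: "e \<in> E" using d unfolding cdarts_def by auto
  obtain p where p: "walk E rv R (Wh e0) p (Wh e)" using white[OF e] by blast
  have "(e, k, True) \<in> cdarts E" using e by (simp add: cdarts_def)
  from walk.walk_snoc[OF p this] have "walk E rv R (Wh e0) (p @ [(e, k, True)]) (Bl (ctgt rv R k e))" by simp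
  with p show ?thesis unfolding d by (cases b) auto
qed

lemma dphi_cohomologous:
  assumes "\<And>e k. e \<in> E \<Longrightarrow> \<phi>2 (e, k) = \<phi>1 (e, k) * f (Bl (ctgt rv R k e)) / f (Wh e)" "d \<in> cdarts E"
  shows "dphi \<phi>2 d = dphi \<phi>1 d * (f (ctarget rv R d) / f (corigin rv R d))"
proof -
  obtain e k b where "d = (e, k, b)" "e \<in> E" using assms(2) unfolding cdarts_def by auto
  then show ?thesis using assms(1) by (cases b) (simp_all add: field_simps)
qed

context
  fixes E :: "'d set" and rv R :: "'d \<Rightarrow> 'd" and th :: "'d \<Rightarrow> real"
  assumes iso: "isoradial E rv R th"
begin

lemma prod_cface_cohomologous:
  assumes "cohomologous E rv R \<phi>1 \<phi>2" "d \<in> cdarts E"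
  shows "(\<Prod>d'\<in>orbit (cface E rv R) d. dphi \<phi>2 d') = (\<Prod>d'\<in>orbit (cface E rv R) d. dphi \<phi>1 d')"
proof -
  obtain f :: "'d cvert \<Rightarrow> complex" where f: "\<And>v. norm (f v) = 1"
    and gauge: "\<And>e k. e \<in> E \<Longrightarrow> \<phi>2 (e, k) = \<phi>1 (e, k) * f (Bl (ctgt rv R k e)) / f (Wh e)"
    using assms(1) unfolding cohomologous_def by blast
  have f0: "f v \<noteq> 0" for v using f[of v] by auto
  let ?O = "orbit (cface E rv R) d"
  have "(\<Prod>d'\<in>?O. dphi \<phi>2 d') = (\<Prod>d'\<in>?O. dphi \<phi>1 d' * (f (ctarget rv R d') / f (corigin rv R d')))"
    by (rule prod.cong) (use cface_orbit_subset[OF iso assms(2)] dphi_cohomologous[OF gauge] in auto)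
  also have "\<dots> = (\<Prod>d'\<in>?O. dphi \<phi>1 d') * (\<Prod>d'\<in>?O. f (ctarget rv R d') / f (corigin rv R d'))"
    by (rule prod.distrib)
  also have "\<dots> = (\<Prod>d'\<in>?O. dphi \<phi>1 d')"
    using prod_coboundary_cface[OF iso assms(2), where s=f, OF f0] by simp
  finally show ?thesis .
qed

lemma kasteleyn_if_cohomologous_spin_structure:
  assumes signs: "\<forall>e\<in>E. \<forall>k. \<omega> (e, k) = 1 \<or> \<omega> (e, k) = -1" and ext: "\<omega> \<in> extensional (E \<times> UNIV)"
    and S: "spin_structure E rv R th \<phi>" and coh: "cohomologous E rv R (spin_of E R th \<omega>) \<phi>"
  shows "kasteleyn E rv R \<omega>"
proof -
  have "(\<Prod>d'\<in>orbit (cface E rv R) d. dphi (spin_of E R th \<omega>) d') = 1" if "d \<in> cdarts E" for d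
    using prod_cface_cohomologous[OF coh that] S that unfolding spin_structure_def by simp
  then show ?thesis
    using signs ext prod_cface_spin_of_eq_1_iff[OF iso signs] unfolding kasteleyn_def by blast
qed

text \<open>Dividing a spin structure by the phases leaves a \<open>\<plusminus>1\<close>-valued cocycle only up to a gauge; its
  square, however, is closed, since \<open>\<phi>\<close> and the phases satisfy the same holonomy condition.\<close>

lemma spin_structure_square_ratio_closed:
  assumes S: "spin_structure E rv R th \<phi>" and cp: "closed_path E rv R \<gamma>"
  shows "prod_list (map (\<lambda>d. (dphi \<phi> d / dphi (phase R th) d)\<^sup>2) \<gamma>) = 1"
proof -
  have "norm (dphi \<phi> d) = 1" if "d \<in> set \<gamma>" for d
  proof -
    have "d \<in> cdarts E" using that cp unfolding closed_path_def by blast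
    then obtain e k b where d: "d = (e, k, b)" and e: "e \<in> E" unfolding cdarts_def by auto
    have "norm (\<phi> (e, k)) = 1" using S e unfolding spin_structure_def by blast
    then show ?thesis unfolding d by (rule norm_dphi)
  qed
  then have "norm (path_phi \<phi> \<gamma>) = 1" by (rule norm_path_phi)
  then have "(path_phi \<phi> \<gamma>)\<^sup>2 \<noteq> 0" by auto
  moreover have "inverse ((path_phi \<phi> \<gamma>)\<^sup>2) = inverse ((path_phi (phase R th) \<gamma>)\<^sup>2)"
    using S cp path_hol_phase[OF cp] unfolding spin_structure_def by simp
  then have "(path_phi \<phi> \<gamma>)\<^sup>2 = (path_phi (phase R th) \<gamma>)\<^sup>2" by simp
  moreover have "prod_list (map (\<lambda>d. (dphi \<phi> d / dphi (phase R th) d)\<^sup>2) \<gamma>)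
      = (path_phi \<phi> \<gamma>)\<^sup>2 / (path_phi (phase R th) \<gamma>)\<^sup>2"
    unfolding path_phi_def by (induction \<gamma>) (simp_all add: power_mult_distrib field_simps)
  ultimately show ?thesis by simp
qed

lemma spin_structure_ratio_potential:
  assumes S: "spin_structure E rv R th \<phi>"
  obtains h where "\<And>v. norm (h v) = 1"
    and "\<And>e k. e \<in> E \<Longrightarrow> h (Bl (ctgt rv R k e)) = h (Wh e) * (\<phi> (e, k) / phase R th (e, k))\<^sup>2"
proof -
  define \<Psi> where "\<Psi> d = (dphi \<phi> d / dphi (phase R th) d)\<^sup>2" for d
  have norm_\<phi>: "\<And>e k. e \<in> E \<Longrightarrow> norm (\<phi> (e, k)) = 1" using S unfolding spin_structure_def by blast
  have norm_\<Psi>: "norm (\<Psi> d) = 1" if d: "d \<in> cdarts E" for d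
  proof -
    obtain e k b where d: "d = (e, k, b)" and e: "e \<in> E" using d unfolding cdarts_def by auto
    show ?thesis
      using norm_dphi[of \<phi> e k b, OF norm_\<phi>[OF e]] norm_dphi[of "phase R th" e k b, OF norm_phase]
      unfolding \<Psi>_def d by (simp add: norm_power norm_divide)
  qed
  obtain e0 where e0: "e0 \<in> E" using darts_nonempty[OF iso] by blast
  obtain h where h: "\<And>v. norm (h v) = 1"
    and dh: "\<And>d. d \<in> cdarts E \<Longrightarrow> h (ctarget rv R d) = h (corigin rv R d) * \<Psi> d"
  proof (rule closed_cochain_potential)
    show "\<Psi> (crev d) = inverse (\<Psi> d)" for d unfolding \<Psi>_def dphi_crev by (simp add: field_simps)
    show "prod_list (map \<Psi> \<gamma>) = 1" if "closed_path E rv R \<gamma>" for \<gamma>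
      using spin_structure_square_ratio_closed[OF S that] unfolding \<Psi>_def .
  qed (use norm_\<Psi> walk_to_every_vertex[OF iso e0] in auto)
  show thesis
  proof (rule that[OF h])
    fix e k assume "e \<in> E"
    then have "(e, k, True) \<in> cdarts E" by (simp add: cdarts_def)
    from dh[OF this] show "h (Bl (ctgt rv R k e)) = h (Wh e) * (\<phi> (e, k) / phase R th (e, k))\<^sup>2"
      by (simp add: \<Psi>_def)
  qed
qed

lemma spin_structure_cohomologous_spin_of:
  assumes S: "spin_structure E rv R th \<phi>"
  obtains \<omega> where "kasteleyn E rv R \<omega>" "cohomologous E rv R (spin_of E R th \<omega>) \<phi>"
proof -
  obtain h where h: "\<And>v. norm (h v) = 1"
    and dh: "\<And>e k. e \<in> E \<Longrightarrow> h (Bl (ctgt rv R k e)) = h (Wh e) * (\<phi> (e, k) / phase R th (e, k))\<^sup>2"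
    using spin_structure_ratio_potential[OF S] by blast
  define r where "r v = csqrt (h v)" for v
  have r: "norm (r v) = 1" "r v \<noteq> 0" "(r v)\<^sup>2 = h v" for v
    using h[of v] unfolding r_def by auto
  define z where "z e k = \<phi> (e, k) / phase R th (e, k) * r (Wh e) / r (Bl (ctgt rv R k e))" for e k
  have z: "z e k = 1 \<or> z e k = -1" if e: "e \<in> E" for e k
  proof -
    have "(z e k)\<^sup>2 = (\<phi> (e, k) / phase R th (e, k))\<^sup>2 * h (Wh e) / h (Bl (ctgt rv R k e))"
      unfolding z_def by (simp add: power_mult_distrib power_divide r)
    also have "\<dots> = 1" using dh[OF e, of k] h[of "Wh e"] h[of "Bl (ctgt rv R k e)"]
      by (auto simp: field_simps)
    finally show ?thesis by (simp add: power2_eq_1_iff)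
  qed
  define \<omega> where "\<omega> = (\<lambda>(e, k). if e \<in> E then Re (z e k) else undefined)"
  have \<omega>z: "complex_of_real (\<omega> (e, k)) = z e k" if "e \<in> E" for e k
    using z[OF that, of k] that unfolding \<omega>_def by auto
  have signs: "\<forall>e\<in>E. \<forall>k. \<omega> (e, k) = 1 \<or> \<omega> (e, k) = -1"
    using z \<omega>z by (metis of_real_1 of_real_eq_iff of_real_minus)
  have coh: "cohomologous E rv R (spin_of E R th \<omega>) \<phi>"
    unfolding cohomologous_def
  proof (intro exI[of _ r] conjI allI ballI)
    show "norm (r v) = 1" for v by (rule r)
    show "\<phi> (e, k) = spin_of E R th \<omega> (e, k) * r (Bl (ctgt rv R k e)) / r (Wh e)" if e: "e \<in> E" for e k
    proof -
      have "spin_of E R th \<omega> (e, k) = phase R th (e, k) * z e k"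
        using e \<omega>z[OF e, of k] by (simp add: spin_of_def)
      then show ?thesis
        using phase_nonzero[of R th e k] r(2)[of "Wh e"] r(2)[of "Bl (ctgt rv R k e)"]
        unfolding z_def by (simp add: field_simps)
    qed
  qed
  have "\<omega> \<in> extensional (E \<times> UNIV)" unfolding \<omega>_def extensional_def by auto
  from kasteleyn_if_cohomologous_spin_structure[OF signs this S coh] coh show thesis by (rule that)
qed

end

theorem proposition3p7:
  fixes E :: "'d set" and rv R :: "'d \<Rightarrow> 'd" and th :: "'d \<Rightarrow> real"
  assumes "isoradial E rv R th"
    and "\<forall>e\<in>E. 0 < th e \<and> th e < pi / 2"
  shows "(\<forall>\<omega>. kasteleyn E rv R \<omega> \<longrightarrow>
            (\<exists>!\<phi>. spin_structure E rv R th \<phi> \<and> dirac_identity E rv R th \<omega> \<phi>))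
       \<and> (\<forall>\<omega>1 \<omega>2 \<phi>1 \<phi>2.
            kasteleyn E rv R \<omega>1 \<longrightarrow> kasteleyn E rv R \<omega>2 \<longrightarrow>
            spin_structure E rv R th \<phi>1 \<longrightarrow> spin_structure E rv R th \<phi>2 \<longrightarrow>
            dirac_identity E rv R th \<omega>1 \<phi>1 \<longrightarrow> dirac_identity E rv R th \<omega>2 \<phi>2 \<longrightarrow>
            (kast_equiv E rv R \<omega>1 \<omega>2 \<longleftrightarrow> cohomologous E rv R \<phi>1 \<phi>2))
       \<and> (\<forall>\<phi>. spin_structure E rv R th \<phi> \<longrightarrow>
            (\<exists>\<omega> \<phi>'. kasteleyn E rv R \<omega> \<and> spin_structure E rv R th \<phi>' \<and>
                     dirac_identity E rv R th \<omega> \<phi>' \<and> cohomologous E rv R \<phi>' \<phi>))"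
proof (intro conjI allI impI)
  note iso = assms(1) and pos = assms(2)
  have spin_of: "spin_structure E rv R th (spin_of E R th \<omega>) \<and> dirac_identity E rv R th \<omega> (spin_of E R th \<omega>)"
    if "kasteleyn E rv R \<omega>" for \<omega>
    using spin_structure_spin_of[OF iso that] dirac_identity_spin_of[OF iso pos] by blast
  note unique = dirac_identity_unique[OF iso pos]
  show "\<exists>!\<phi>. spin_structure E rv R th \<phi> \<and> dirac_identity E rv R th \<omega> \<phi>" if "kasteleyn E rv R \<omega>" for \<omega>
    using spin_of[OF that] unique[OF that] by blast
  show "kast_equiv E rv R \<omega>1 \<omega>2 \<longleftrightarrow> cohomologous E rv R \<phi>1 \<phi>2"
    if "kasteleyn E rv R \<omega>1" "kasteleyn E rv R \<omega>2" "spin_structure E rv R th \<phi>1" "spin_structure E rv R th \<phi>2"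
      "dirac_identity E rv R th \<omega>1 \<phi>1" "dirac_identity E rv R th \<omega>2 \<phi>2" for \<omega>1 \<omega>2 \<phi>1 \<phi>2
    unfolding unique[OF that(1,3,5)] unique[OF that(2,4,6)]
    using kast_equiv_imp_cohomologous cohomologous_imp_kast_equiv[OF that(1,2)] by blast
  show "\<exists>\<omega> \<phi>'. kasteleyn E rv R \<omega> \<and> spin_structure E rv R th \<phi>' \<and>
            dirac_identity E rv R th \<omega> \<phi>' \<and> cohomologous E rv R \<phi>' \<phi>"
    if S: "spin_structure E rv R th \<phi>" for \<phi>
  proof -
    obtain \<omega> where "kasteleyn E rv R \<omega>" "cohomologous E rv R (spin_of E R th \<omega>) \<phi>"
      using spin_structure_cohomologous_spin_of[OF iso S] .
    then show ?thesis using spin_of by blast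
  qed
qed

end
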